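(* Let $\mathcal{T}=(V,A,E,f,q,v_0)$ be a decorated rooted tree such that $f(\alpha)\in\{0,1\}$ for all $\alpha\in A$. Let $n=\delta_{v_0}$, assume $n\ge1$, let $\mathcal{T}_1,\dots,\mathcal{T}_n$ be the decorated trees attached to $\mathcal{T}$ as described in the context, and let $d=\deg(\mathcal{T})$. Then $$g(\mathcal{T})=\frac{(d-1)(d-2)}{2}-\sum_{i=1}^n\delta(\mathcal{T}_i).$$
   Context: A graph is a pair $(X_0,X_1)$ of finite sets such that each element of $X_1$ (an edge) is a $2$-element subset of $X_0$; elements of $X_0$ are cells. The valency $\delta_x$ of a cell is the number of edges containing it. A path is a tuple $(x_0,\dots,x_n)$ ($n\ge0$) of cells with $\{x_i,x_{i+1}\}$ an edge for each $i<n$, these edges pairwise distinct; a cell/edge is in the path if it is some $x_i$ / some $\{x_i,x_{i+1}\}$. The graph is a tree if any two cells $x,y$ are joined by a unique path $\gamma_{x,y}$. A decorated tree is $(V,A,E,f,q)$ with $V$ (vertices), $A$ (arrows) finite disjoint sets, $(V\cup A,E)$ a tree, every arrow of valency $1$, $f:A\to\mathbb{Z}$, $q(e,x)\in\mathbb{Z}$ for each $e\in E$, $x\in e$, with $q(e,\alpha)=1$ for $\alpha\in A$, and for each $v\in V$ and distinct edges $e,e'\ni v$, $\gcd(q(e,v),q(e',v))=1$. $A_0=\{\alpha\in A:f(\alpha)=0\}$. For $x\in V\cup A$, $e\ni x$: $Q(e,x)=\prod q(e',x)$ over edges $e'\ne e$ containing $x$ (empty product $=1$); for an edge $e=\{x,y\}$,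 $\det(e)=q(e,x)q(e,y)-Q(e,x)Q(e,y)$. An edge $\varepsilon$ is incident to a path $\gamma$ if it is not in $\gamma$ but contains a cell $u$ of $\gamma$; $q(\varepsilon,\gamma):=q(\varepsilon,u)$. For $v\ne\alpha$, $v\in V\cup A$, $\alpha\in A$: $x_{v,\alpha}=f(\alpha)\prod_\varepsilon q(\varepsilon,\gamma_{v,\alpha})$ over edges incident to $\gamma_{v,\alpha}$; $\hat x_{v,\alpha}$ the same with product restricted to $\varepsilon\not\ni v$. For $v\in V\cup A_0$, $N_v=\sum_{\alpha\in A\setminus A_0}x_{v,\alpha}$; $M(\mathcal{T})=-\sum_{v\in V\cup A_0}N_v(\delta_v-2)$. For $u\in V\cup A$, $e\ni u$: $p(u,e)=\sum\hat x_{u,\alpha}$ over $\alpha\in A\setminus A_0$ with $e$ in $\gamma_{u,\alpha}$. For $\alpha\in A\setminus A_0$ with unique edge $e_\alpha$: $F(\alpha)=\gcd(f(\alpha),p(\alpha,e_\alpha))\ge0$; $F(\mathcal{T})=\sum_{\alpha\in A\setminus A_0}F(\alpha)$. $g(\mathcal{T})=\tfrac12(2-M(\mathcal{T})-F(\mathcal{T}))$, $\delta(\mathcal{T})=\tfrac12(F(\mathcal{T})-M(\mathcal{T}))$. A root of $(V,A,E,f,q)$ is a vertex $v_0$ with $q(e,v_0)=1$ for every edge $e\ni v_0$ such that for every $v\in V\setminus\{v_0\}$, all edges $e\ni v$ not in $\gamma_{v_0,v}$ satisfy $q(e,v)\ge1$ and at most one of them satisfies $q(e,v)\ne1$. A decorated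 rooted tree is $(V,A,E,f,q,v_0)$ with $v_0$ a root. $\deg(\mathcal{T})$ denotes $N_{v_0}$. Central elements: for a path $(w_1,\dots,w_m)$, $m\ge2$, say it satisfies $(+)$ if every edge $e\ni w_m$ other than $\{w_{m-1},w_m\}$ has $q(e,w_m)\ge1$ and at most one such edge has $q(e,w_m)>1$. An element $\eta\in V\cup A$ of a decorated tree is central if $\gamma_{\eta,v}$ satisfies $(+)$ for every $v\in V\setminus\{\eta\}$. For a decorated tree $\mathcal{S}=(V,A,E,f,q)$ and central $\eta$, $\mathcal{S}^{(\eta)}$ is the unique decorated tree $(V,A,E,f,q^* )$ (such a unique tree exists) with: $q^*(e,\eta)=q(e,\eta)$ for all $e\ni\eta$; $q^*(e,v)=q(e,v)$ for all $v\in V\setminus\{\eta\}$ and edges $e\ni v$ not in $\gamma_{\eta,v}$; $q^*(e,v)=Q(e,v)-q(e,v)$ for every edge $e=\{\eta,v\}$ with $v\in V$; and $\det^*(e)=-\det(e)$ for every edge $e=\{u,v\}$ with $u,v\in V\setminus\{\eta\}$ ($\det^*$ computed with $q^*$). The trees $\mathcal{T}_i$: let $v_1,\dots,v_n$ be the distinct cells adjacent to $v_0$, $e_i=\{v_0,v_i\}$. Delete $e_1,\dots,e_n$ from $\mathcal{T}$; let $\mathcal{C}_i$ be the connected component containing $v_i$. Let $\mathcal{T}'_i$ be obtained from $\mathcal{C}_i$ by adding an arrow $\alpha_i$ with $f(\alpha_i)=0$ and an edge $\{\alpha_i,v_i\}$ decorated $q(e_i,v_i)$ near $v_i$ and $1$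 near $\alpha_i$. Then $\alpha_i$ is central in $\mathcal{T}'_i$ and $\mathcal{T}_i:=(\mathcal{T}'_i)^{(\alpha_i)}$. *)

theory Defs
  imports Complex_Main
begin

record 'a dtree =
  Vs :: "'a set"
  As :: "'a set"
  Es :: "'a set set"
  fd :: "'a \<Rightarrow> int"
  qd :: "'a set \<Rightarrow> 'a \<Rightarrow> int"

definition is_graph :: "'a set \<Rightarrow> 'a set set \<Rightarrow> bool" where
  "is_graph X0 X1 \<longleftrightarrow> finite X0 \<and> finite X1 \<and> (\<forall>e\<in>X1. e \<subseteq> X0 \<and> card e = 2)"

definition path_edges :: "'a list \<Rightarrow> 'a set list" where
  "path_edges xs = map (\<lambda>i. {xs ! i, xs ! Suc i}) [0..<length xs - 1]"

definition is_path :: "'a set \<Rightarrow> 'a set set \<Rightarrow> 'a list \<Rightarrow> bool" where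
  "is_path X0 X1 xs \<longleftrightarrow> xs \<noteq> [] \<and> set xs \<subseteq> X0 \<and>
     (\<forall>i < length xs - 1. {xs ! i, xs ! Suc i} \<in> X1) \<and> distinct (path_edges xs)"

definition is_tree :: "'a set \<Rightarrow> 'a set set \<Rightarrow> bool" where
  "is_tree X0 X1 \<longleftrightarrow> is_graph X0 X1 \<and>
     (\<forall>x\<in>X0. \<forall>y\<in>X0. \<exists>!p. is_path X0 X1 p \<and> hd p = x \<and> last p = y)"

definition cells :: "('a, 'b) dtree_scheme \<Rightarrow> 'a set" where
  "cells T = Vs T \<union> As T"

definition valency :: "('a, 'b) dtree_scheme \<Rightarrow> 'a \<Rightarrow> nat" where
  "valency T x = card {e \<in> Es T. x \<in> e}"

definition gam :: "('a, 'b) dtree_scheme \<Rightarrow> 'a \<Rightarrow> 'a \<Rightarrow> 'a list" where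
  "gam T x y = (THE p. is_path (cells T) (Es T) p \<and> hd p = x \<and> last p = y)"

definition decorated_tree :: "('a, 'b) dtree_scheme \<Rightarrow> bool" where
  "decorated_tree T \<longleftrightarrow> finite (Vs T) \<and> finite (As T) \<and> Vs T \<inter> As T = {} \<and>
     is_tree (cells T) (Es T) \<and>
     (\<forall>\<alpha>\<in>As T. valency T \<alpha> = 1) \<and>
     (\<forall>e\<in>Es T. \<forall>\<alpha>\<in>As T. \<alpha> \<in> e \<longrightarrow> qd T e \<alpha> = 1) \<and>
     (\<forall>v\<in>Vs T. \<forall>e\<in>Es T. \<forall>e'\<in>Es T. v \<in> e \<and> v \<in> e' \<and> e \<noteq> e' \<longrightarrow>
         gcd (qd T e v) (qd T e' v) = 1)"

definition A0 :: "('a, 'b) dtree_scheme \<Rightarrow> 'a set" where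
  "A0 T = {\<alpha> \<in> As T. fd T \<alpha> = 0}"

definition Qf :: "('a, 'b) dtree_scheme \<Rightarrow> 'a set \<Rightarrow> 'a \<Rightarrow> int" where
  "Qf T e x = (\<Prod>e'\<in>{e' \<in> Es T. x \<in> e' \<and> e' \<noteq> e}. qd T e' x)"

definition detf :: "('a, 'b) dtree_scheme \<Rightarrow> 'a \<Rightarrow> 'a \<Rightarrow> int" where
  "detf T x y = qd T {x, y} x * qd T {x, y} y - Qf T {x, y} x * Qf T {x, y} y"

definition incident :: "('a, 'b) dtree_scheme \<Rightarrow> 'a list \<Rightarrow> 'a set set" where
  "incident T p = {\<epsilon> \<in> Es T. \<epsilon> \<notin> set (path_edges p) \<and> (\<exists>u\<in>set p. u \<in> \<epsilon>)}"

definition qpath :: "('a, 'b) dtree_scheme \<Rightarrow> 'a set \<Rightarrow> 'a list \<Rightarrow> int" where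
  "qpath T \<epsilon> p = qd T \<epsilon> (THE u. u \<in> set p \<and> u \<in> \<epsilon>)"

definition xval :: "('a, 'b) dtree_scheme \<Rightarrow> 'a \<Rightarrow> 'a \<Rightarrow> int" where
  "xval T v \<alpha> = fd T \<alpha> * (\<Prod>\<epsilon>\<in>incident T (gam T v \<alpha>). qpath T \<epsilon> (gam T v \<alpha>))"

definition xhat :: "('a, 'b) dtree_scheme \<Rightarrow> 'a \<Rightarrow> 'a \<Rightarrow> int" where
  "xhat T v \<alpha> = fd T \<alpha> *
     (\<Prod>\<epsilon>\<in>{\<epsilon> \<in> incident T (gam T v \<alpha>). v \<notin> \<epsilon>}. qpath T \<epsilon> (gam T v \<alpha>))"

definition Nf :: "('a, 'b) dtree_scheme \<Rightarrow> 'a \<Rightarrow> int" where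
  "Nf T v = (\<Sum>\<alpha>\<in>As T - A0 T. xval T v \<alpha>)"

definition Mf :: "('a, 'b) dtree_scheme \<Rightarrow> int" where
  "Mf T = - (\<Sum>v\<in>Vs T \<union> A0 T. Nf T v * (int (valency T v) - 2))"

definition pf :: "('a, 'b) dtree_scheme \<Rightarrow> 'a \<Rightarrow> 'a set \<Rightarrow> int" where
  "pf T u e = (\<Sum>\<alpha>\<in>{\<alpha> \<in> As T - A0 T. e \<in> set (path_edges (gam T u \<alpha>))}. xhat T u \<alpha>)"

definition e_arrow :: "('a, 'b) dtree_scheme \<Rightarrow> 'a \<Rightarrow> 'a set" where
  "e_arrow T \<alpha> = (THE e. e \<in> Es T \<and> \<alpha> \<in> e)"

definition F_arrow :: "('a, 'b) dtree_scheme \<Rightarrow> 'a \<Rightarrow> int" where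
  "F_arrow T \<alpha> = gcd (fd T \<alpha>) (pf T \<alpha> (e_arrow T \<alpha>))"

definition Ff :: "('a, 'b) dtree_scheme \<Rightarrow> int" where
  "Ff T = (\<Sum>\<alpha>\<in>As T - A0 T. F_arrow T \<alpha>)"

definition genus :: "('a, 'b) dtree_scheme \<Rightarrow> real" where
  "genus T = (2 - real_of_int (Mf T) - real_of_int (Ff T)) / 2"

definition delta :: "('a, 'b) dtree_scheme \<Rightarrow> real" where
  "delta T = (real_of_int (Ff T) - real_of_int (Mf T)) / 2"

definition is_root :: "('a, 'b) dtree_scheme \<Rightarrow> 'a \<Rightarrow> bool" where
  "is_root T v0 \<longleftrightarrow> v0 \<in> Vs T \<and> (\<forall>e\<in>Es T. v0 \<in> e \<longrightarrow> qd T e v0 = 1) \<and>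
     (\<forall>v\<in>Vs T - {v0}.
        (\<forall>e\<in>Es T. v \<in> e \<and> e \<notin> set (path_edges (gam T v0 v)) \<longrightarrow> qd T e v \<ge> 1) \<and>
        card {e \<in> Es T. v \<in> e \<and> e \<notin> set (path_edges (gam T v0 v)) \<and> qd T e v \<noteq> 1} \<le> 1)"

definition deg :: "('a, 'b) dtree_scheme \<Rightarrow> 'a \<Rightarrow> int" where
  "deg T v0 = Nf T v0"

text \<open>Characterisation of q^*; q^* is normalised to 0 off incident pairs (e,x), x \<in> e \<in> E,
  which are the only values the theory uses.\<close>
definition star_cond :: "('a, 'b) dtree_scheme \<Rightarrow> 'a \<Rightarrow> ('a set \<Rightarrow> 'a \<Rightarrow> int) \<Rightarrow> bool" where
  "star_cond S \<eta> q' \<longleftrightarrow>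
     decorated_tree (S\<lparr>qd := q'\<rparr>) \<and>
     (\<forall>e x. \<not> (e \<in> Es S \<and> x \<in> e) \<longrightarrow> q' e x = 0) \<and>
     (\<forall>e\<in>Es S. \<eta> \<in> e \<longrightarrow> q' e \<eta> = qd S e \<eta>) \<and>
     (\<forall>v\<in>Vs S - {\<eta>}. \<forall>e\<in>Es S. v \<in> e \<and> e \<notin> set (path_edges (gam S \<eta> v)) \<longrightarrow>
         q' e v = qd S e v) \<and>
     (\<forall>v\<in>Vs S. {\<eta>, v} \<in> Es S \<longrightarrow> q' {\<eta>, v} v = Qf S {\<eta>, v} v - qd S {\<eta>, v} v) \<and>
     (\<forall>u\<in>Vs S - {\<eta>}. \<forall>v\<in>Vs S - {\<eta>}. {u, v} \<in> Es S \<longrightarrow>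
         detf (S\<lparr>qd := q'\<rparr>) u v = - detf S u v)"

definition star :: "('a, 'b) dtree_scheme \<Rightarrow> 'a \<Rightarrow> ('a, 'b) dtree_scheme" where
  "star S \<eta> = S\<lparr>qd := (THE q'. star_cond S \<eta> q')\<rparr>"

definition comp_cells :: "'a set set \<Rightarrow> 'a \<Rightarrow> 'a set" where
  "comp_cells X1 w = {x. (w, x) \<in> {(a, b). {a, b} \<in> X1}\<^sup>*}"

definition nbrs :: "('a, 'b) dtree_scheme \<Rightarrow> 'a \<Rightarrow> 'a set" where
  "nbrs T v0 = {w. {v0, w} \<in> Es T}"

text \<open>T'_i for the neighbour w of v0: the component C of w after deleting all edges at v0,
  with a new arrow (represented by None; old cells x become Some x) attached to w.\<close>
definition Tprime :: "('a, 'b) dtree_scheme \<Rightarrow> 'a \<Rightarrow> 'a \<Rightarrow> 'a option dtree" where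
  "Tprime T v0 w =
    (let E' = {e \<in> Es T. v0 \<notin> e};
         C = comp_cells E' w
     in \<lparr> Vs = Some ` (Vs T \<inter> C),
          As = insert None (Some ` (As T \<inter> C)),
          Es = insert {None, Some w} ((\<lambda>e. Some ` e) ` {e \<in> E'. e \<subseteq> C}),
          fd = (\<lambda>x. case x of None \<Rightarrow> 0 | Some y \<Rightarrow> fd T y),
          qd = (\<lambda>e x. if e = {None, Some w}
                      then (if x = None then 1 else qd T {v0, w} w)
                      else (case x of None \<Rightarrow> 0 | Some y \<Rightarrow> qd T (Some -` e) y)) \<rparr>)"

definition Ti :: "('a, 'b) dtree_scheme \<Rightarrow> 'a \<Rightarrow> 'a \<Rightarrow> 'a option dtree" where
  "Ti T v0 w = star (Tprime T v0 w) None"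

end

theory Submission
  imports Defs
begin

text \<open>
  Let \<open>P(y)\<close> be the weight of the path from a distinguished arrow \<open>\<eta>\<close> to \<open>y\<close>, the product of the
  labels of the edges incident to it. For a central arrow, \<open>S\<^sup>(\<eta>)\<close> differs from \<open>S\<close> only on the
  edges pointing towards \<open>\<eta>\<close>: at a vertex \<open>y\<close>, \<open>q + q\<^sup>* = Q G\<^sup>2\<close>, where \<open>G\<close> is the product of the
  labels hanging off the path from \<open>\<eta>\<close> before \<open>y\<close>; the determinant condition forces this edge by edge,
  moving away from \<open>\<eta>\<close>. Consequently \<open>x\<^sub>y\<^sub>,\<^sub>\<alpha>(S) + x\<^sub>y\<^sub>,\<^sub>\<alpha>(S\<^sup>(\<eta>)) = P(y) P(\<alpha>)\<close> whenever \<open>f(\<alpha>) = 1\<close>,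
  and together with the telescoping identity \<open>\<Sum>\<^sub>y P(y) (\<delta>\<^sub>y - 2) = -1\<close> this expresses \<open>M(S\<^sup>(\<eta>))\<close>
  and \<open>F(S\<^sup>(\<eta>))\<close> through \<open>S\<close>.

  In the rooted tree \<open>T\<close> all labels at \<open>v\<^sub>0\<close> are \<open>1\<close>, so path weights between different branches
  factor as \<open>P(u) P(\<alpha>)\<close>. Hence for \<open>v\<close> in the \<open>i\<close>-th branch \<open>N\<^sub>v(T) = N\<^sub>v(T'\<^sub>i) + P(v) (d - d\<^sub>i)\<close>, where
  \<open>d\<^sub>i\<close> is the part of \<open>d = deg T\<close> coming from the branch. Summing over the branches gives
  \<open>M(T) + \<Sum>\<^sub>i M(T\<^sub>i) = 2 - (d - 1)(d - 2)\<close> and \<open>F(T) = \<Sum>\<^sub>i F(T\<^sub>i)\<close>, which is the genus formula.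
\<close>

section \<open>Paths in trees\<close>

lemma path_edges_Nil [simp]: "path_edges [] = []"
  by (simp add: path_edges_def)

lemma path_edges_singleton [simp]: "path_edges [x] = []"
  by (simp add: path_edges_def)

lemma path_edges_Cons_Cons [simp]: "path_edges (x # y # ys) = {x, y} # path_edges (y # ys)"
  by (simp add: path_edges_def upt_conv_Cons map_Suc_upt[symmetric] del: upt_Suc)

lemma is_path_iff:
  "is_path X0 X1 p \<longleftrightarrow> p \<noteq> [] \<and> set p \<subseteq> X0 \<and> set (path_edges p) \<subseteq> X1 \<and> distinct (path_edges p)"
  unfolding is_path_def path_edges_def by auto

lemma length_path_edges: "length (path_edges xs) = length xs - 1"
  by (simp add: path_edges_def)

lemma path_edges_subset: "e \<in> set (path_edges xs) \<Longrightarrow> e \<subseteq> set xs"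
  by (induct xs rule: induct_list012) auto

lemma path_edges_snoc: "xs \<noteq> [] \<Longrightarrow> path_edges (xs @ [z]) = path_edges xs @ [{last xs, z}]"
  by (induct xs rule: induct_list012) auto

lemma path_edges_append:
  "xs \<noteq> [] \<Longrightarrow> ys \<noteq> [] \<Longrightarrow> path_edges (xs @ ys) = path_edges xs @ {last xs, hd ys} # path_edges ys"
proof (induct xs rule: induct_list012)
  case (2 x)
  then show ?case by (cases ys) auto
next
  case (3 x y zs)
  then show ?case by auto
qed simp

lemma path_edges_append_tl:
  assumes "xs \<noteq> []" "ys \<noteq> []" "last xs = hd ys"
  shows "path_edges (xs @ tl ys) = path_edges xs @ path_edges ys"
proof (cases ys)
  case (Cons y ys')
  then show ?thesis
    using assms by (cases ys') (simp_all add: path_edges_append)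
qed (use assms in simp)

lemma path_edges_rev: "path_edges (rev xs) = rev (path_edges xs)"
proof (induct xs rule: induct_list012)
  case (3 x y zs)
  have "path_edges (rev (x # y # zs)) = path_edges (rev (y # zs)) @ [{y, x}]"
    using path_edges_snoc[of "rev (y # zs)" x] by simp
  with 3 show ?case by (simp add: insert_commute)
qed auto

lemma path_edges_map: "path_edges (map g p) = map (image g) (path_edges p)"
  by (induct p rule: induct_list012) auto

lemma ex_path_edge_containing:
  "2 \<le> length p \<Longrightarrow> u \<in> set p \<Longrightarrow> \<exists>e\<in>set (path_edges p). u \<in> e"
proof (induct p rule: induct_list012)
  case (3 x y zs)
  show ?case
  proof (cases "u = x \<or> u = y")
    case False
    then have u: "u \<in> set zs" using 3(4) by auto
    then have "2 \<le> length (y # zs)" by (cases zs) auto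
    then obtain e where "e \<in> set (path_edges (y # zs))" "u \<in> e" using 3(2) u by auto
    then show ?thesis by auto
  qed auto
qed auto

lemma is_path_singleton [simp]: "is_path X0 X1 [x] \<longleftrightarrow> x \<in> X0"
  by (simp add: is_path_iff)

lemma is_path_pair: "{a, b} \<in> X1 \<Longrightarrow> a \<in> X0 \<Longrightarrow> b \<in> X0 \<Longrightarrow> is_path X0 X1 [a, b]"
  by (simp add: is_path_iff)

lemma is_path_rev [simp]: "is_path X0 X1 (rev p) \<longleftrightarrow> is_path X0 X1 p"
  by (simp add: is_path_iff path_edges_rev)

lemma is_path_appendD1: "is_path X0 X1 (xs @ ys) \<Longrightarrow> xs \<noteq> [] \<Longrightarrow> is_path X0 X1 xs"
  by (cases "ys = []") (auto simp: is_path_iff path_edges_append)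

lemma is_path_appendD2: "is_path X0 X1 (xs @ ys) \<Longrightarrow> ys \<noteq> [] \<Longrightarrow> is_path X0 X1 ys"
  by (cases "xs = []") (auto simp: is_path_iff path_edges_append)

lemma is_path_infixD: "is_path X0 X1 (xs @ ys @ zs) \<Longrightarrow> ys \<noteq> [] \<Longrightarrow> is_path X0 X1 ys"
  by (metis append_is_Nil_conv is_path_appendD1 is_path_appendD2)

lemma is_path_snoc:
  "is_path X0 X1 p \<Longrightarrow> {last p, z} \<in> X1 \<Longrightarrow> z \<notin> set p \<Longrightarrow> z \<in> X0 \<Longrightarrow> is_path X0 X1 (p @ [z])"
  using path_edges_subset[of "{last p, z}" p] by (auto simp: is_path_iff path_edges_snoc)

lemma is_path_map_iff:
  assumes inj: "inj_on g X0" and X1: "X1 \<subseteq> Pow X0" and p: "set p \<subseteq> X0"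
  shows "is_path (g ` X0) (image g ` X1) (map g p) \<longleftrightarrow> is_path X0 X1 p"
proof -
  have pe: "set (path_edges p) \<subseteq> Pow X0" using path_edges_subset p by blast
  have inj_img: "inj_on (image g) (Pow X0)" by (rule inj_on_image_Pow[OF inj])
  have edges: "set (map (image g) (path_edges p)) \<subseteq> image g ` X1 \<longleftrightarrow> set (path_edges p) \<subseteq> X1"
  proof
    assume img: "set (map (image g) (path_edges p)) \<subseteq> image g ` X1"
    show "set (path_edges p) \<subseteq> X1"
    proof
      fix e assume e: "e \<in> set (path_edges p)"
      have "image g e \<in> image g ` X1" using e img by auto
      moreover have "e \<in> Pow X0" using e pe by blast
      ultimately show "e \<in> X1" using inj_on_image_mem_iff[OF inj_img _ X1] by simp
    qed
  qed auto
  have distinct: "distinct (map (image g) (path_edges p)) \<longleftrightarrow> distinct (path_edges p)"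
    using distinct_map inj_on_subset[OF inj_img pe] by auto
  have cells: "set (map g p) \<subseteq> g ` X0" using p by auto
  show ?thesis unfolding is_path_iff path_edges_map using edges distinct cells p by auto
qed

locale tree =
  fixes X0 :: "'a set" and X1 :: "'a set set"
  assumes is_tree: "is_tree X0 X1"
begin

definition tpath :: "'a \<Rightarrow> 'a \<Rightarrow> 'a list" where
  "tpath x y = (THE p. is_path X0 X1 p \<and> hd p = x \<and> last p = y)"

lemma finite_cells: "finite X0" and finite_edges: "finite X1"
  using is_tree by (auto simp: is_tree_def is_graph_def)

lemma edge_subset: "e \<in> X1 \<Longrightarrow> e \<subseteq> X0" and card_edge: "e \<in> X1 \<Longrightarrow> card e = 2"
  using is_tree by (auto simp: is_tree_def is_graph_def)

lemma edge_ends_distinct: "{a, b} \<in> X1 \<Longrightarrow> a \<noteq> b"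
  using card_edge[of "{a, b}"] by auto

lemma edge_ends_in_cells: "{a, b} \<in> X1 \<Longrightarrow> a \<in> X0 \<and> b \<in> X0"
  using edge_subset by auto

lemma edge_eq_doubleton: "e \<in> X1 \<Longrightarrow> x \<in> e \<Longrightarrow> \<exists>y. e = {x, y} \<and> x \<noteq> y"
  using card_edge[of e] by (metis card_2_iff doubleton_eq_iff insertE singletonD)

lemma edge_eq_of_mem: "e \<in> X1 \<Longrightarrow> u \<in> e \<Longrightarrow> u' \<in> e \<Longrightarrow> u \<noteq> u' \<Longrightarrow> e = {u, u'}"
  using edge_eq_doubleton by blast

lemma ex1_path: "x \<in> X0 \<Longrightarrow> y \<in> X0 \<Longrightarrow> \<exists>!p. is_path X0 X1 p \<and> hd p = x \<and> last p = y"
  using is_tree by (auto simp: is_tree_def)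

lemma tpath: "x \<in> X0 \<Longrightarrow> y \<in> X0 \<Longrightarrow> is_path X0 X1 (tpath x y) \<and> hd (tpath x y) = x \<and> last (tpath x y) = y"
  unfolding tpath_def by (rule theI', rule ex1_path)

lemma is_path_tpath: "x \<in> X0 \<Longrightarrow> y \<in> X0 \<Longrightarrow> is_path X0 X1 (tpath x y)"
  and hd_tpath: "x \<in> X0 \<Longrightarrow> y \<in> X0 \<Longrightarrow> hd (tpath x y) = x"
  and last_tpath: "x \<in> X0 \<Longrightarrow> y \<in> X0 \<Longrightarrow> last (tpath x y) = y"
  using tpath by auto

lemma tpath_not_Nil: "x \<in> X0 \<Longrightarrow> y \<in> X0 \<Longrightarrow> tpath x y \<noteq> []"
  using is_path_tpath by (auto simp: is_path_iff)

lemma set_tpath_subset: "x \<in> X0 \<Longrightarrow> y \<in> X0 \<Longrightarrow> set (tpath x y) \<subseteq> X0"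
  using is_path_tpath by (auto simp: is_path_iff)

lemma path_edges_tpath_subset: "x \<in> X0 \<Longrightarrow> y \<in> X0 \<Longrightarrow> set (path_edges (tpath x y)) \<subseteq> X1"
  using is_path_tpath by (auto simp: is_path_iff)

lemma tpath_eqI: "is_path X0 X1 p \<Longrightarrow> hd p = x \<Longrightarrow> last p = y \<Longrightarrow> tpath x y = p"
proof -
  assume p: "is_path X0 X1 p" "hd p = x" "last p = y"
  then have "x \<in> X0" "y \<in> X0" by (auto simp: is_path_iff)
  then show ?thesis using ex1_path[of x y] p tpath[of x y] by blast
qed

lemma path_unique: "is_path X0 X1 p \<Longrightarrow> is_path X0 X1 q \<Longrightarrow> hd p = hd q \<Longrightarrow> last p = last q \<Longrightarrow> p = q"
  using tpath_eqI by metis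

lemma distinct_path: "is_path X0 X1 p \<Longrightarrow> distinct p"
proof (rule ccontr)
  assume p: "is_path X0 X1 p" and "\<not> distinct p"
  then obtain xs ys zs y where "p = xs @ [y] @ ys @ [y] @ zs"
    using not_distinct_decomp by blast
  then have "is_path X0 X1 ([y] @ ys @ [y])" using is_path_infixD[of X0 X1 xs] p by simp
  moreover from this have "is_path X0 X1 [y]" by (auto simp: is_path_iff)
  ultimately have "[y] @ ys @ [y] = [y]" using path_unique[of "[y] @ ys @ [y]" "[y]"] by simp
  then show False by simp
qed

lemma path_chord_adjacent: "is_path X0 X1 (xs @ a # ys @ b # zs) \<Longrightarrow> {a, b} \<in> X1 \<Longrightarrow> ys = []"
proof -
  assume p: "is_path X0 X1 (xs @ a # ys @ b # zs)" and e: "{a, b} \<in> X1"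
  have "is_path X0 X1 (a # ys @ [b])" using is_path_infixD[of X0 X1 xs "a # ys @ [b]" zs] p by simp
  moreover have "is_path X0 X1 [a, b]" using e edge_ends_in_cells by (auto intro: is_path_pair)
  ultimately have "a # ys @ [b] = [a, b]" using path_unique[of "a # ys @ [b]" "[a, b]"] by simp
  then show ?thesis by simp
qed

lemma edge_in_path_edges:
  assumes p: "is_path X0 X1 p" and e: "{a, b} \<in> X1" and a: "a \<in> set p" and b: "b \<in> set p"
  shows "{a, b} \<in> set (path_edges p)"
proof -
  have adjacent: "{c, d} \<in> set (path_edges (us @ c # d # vs))" for us vs :: "'a list" and c d
    by (cases "us = []") (auto simp: path_edges_append)
  obtain xs rest where p_eq: "p = xs @ a # rest" using split_list[OF a] by blast
  show ?thesis
  proof (cases "b \<in> set rest")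
    case True
    then obtain ys zs where "p = xs @ a # ys @ b # zs" using p_eq split_list by fastforce
    with path_chord_adjacent[of xs a ys b zs] p e adjacent show ?thesis by simp
  next
    case False
    then have "b \<in> set xs" using b edge_ends_distinct[OF e] p_eq by auto
    then obtain xs1 ys where "p = xs1 @ b # ys @ a # rest" using p_eq split_list by fastforce
    with path_chord_adjacent[of xs1 b ys a rest] p e adjacent[of b a xs1 rest] show ?thesis
      by (simp add: insert_commute)
  qed
qed

lemma tpath_snoc:
  assumes x: "x \<in> X0" and y: "y \<in> X0" and e: "{y, z} \<in> X1" and z: "z \<notin> set (tpath x y)"
  shows "tpath x z = tpath x y @ [z]"
proof (rule tpath_eqI)
  show "is_path X0 X1 (tpath x y @ [z])"
    using is_path_snoc[OF is_path_tpath[OF x y], of z] e z edge_ends_in_cells last_tpath[OF x y] by simp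
qed (use hd_tpath[OF x y] tpath_not_Nil[OF x y] in auto)

lemma tpath_prefix: "x \<in> X0 \<Longrightarrow> y \<in> X0 \<Longrightarrow> tpath x y = xs @ z # ys \<Longrightarrow> tpath x z = xs @ [z]"
proof -
  assume x: "x \<in> X0" and y: "y \<in> X0" and p: "tpath x y = xs @ z # ys"
  have "is_path X0 X1 ((xs @ [z]) @ ys)" using is_path_tpath[OF x y] p by simp
  then have "is_path X0 X1 (xs @ [z])" by (rule is_path_appendD1) simp
  moreover have "hd (xs @ [z]) = x" using hd_tpath[OF x y] p by (cases xs) auto
  ultimately show ?thesis by (intro tpath_eqI) auto
qed

lemma tpath_refl: "x \<in> X0 \<Longrightarrow> tpath x x = [x]"
  by (rule tpath_eqI) auto

lemma tpath_rev: "x \<in> X0 \<Longrightarrow> y \<in> X0 \<Longrightarrow> tpath y x = rev (tpath x y)"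
  by (rule tpath_eqI) (auto simp: is_path_tpath tpath_not_Nil hd_tpath last_tpath hd_rev last_rev)

lemma distinct_tpath: "x \<in> X0 \<Longrightarrow> y \<in> X0 \<Longrightarrow> distinct (tpath x y)"
  using is_path_tpath distinct_path by blast

lemma tpath_within_component:
  assumes E': "E' \<subseteq> X1" and r: "(x, y) \<in> {(a, b). {a, b} \<in> E'}\<^sup>*" and x: "x \<in> X0"
  shows "y \<in> X0 \<and> set (tpath x y) \<subseteq> {z. (x, z) \<in> {(a, b). {a, b} \<in> E'}\<^sup>*}"
  using r
proof (induct rule: rtrancl_induct)
  case base
  then show ?case using tpath_refl[OF x] x by auto
next
  case (step y z)
  have yz: "{y, z} \<in> X1" using step(2) E' by auto
  then have z: "z \<in> X0" using edge_ends_in_cells by auto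
  show ?case
  proof (cases "z \<in> set (tpath x y)")
    case True
    then obtain xs ys where p: "tpath x y = xs @ z # ys" using split_list by metis
    then have "tpath x z = xs @ [z]" using tpath_prefix x step(3) by blast
    then show ?thesis using step(3) z p by auto
  next
    case False
    then have "tpath x z = tpath x y @ [z]" using tpath_snoc x step(3) yz by blast
    then show ?thesis using step z by (auto intro: rtrancl_into_rtrancl)
  qed
qed

lemma path_ends_connected:
  "is_path X0 X1 p \<Longrightarrow> set (path_edges p) \<subseteq> E' \<Longrightarrow> (hd p, last p) \<in> {(a, b). {a, b} \<in> E'}\<^sup>*"
proof (induct p rule: induct_list012)
  case (3 x y zs)
  have "is_path X0 X1 (y # zs)" using is_path_appendD2[of X0 X1 "[x]" "y # zs"] 3(3) by simp
  with 3 show ?case by (auto intro: converse_rtrancl_into_rtrancl)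
qed (auto simp: is_path_iff)

context
  fixes Y0 :: "'a set" and g :: "'a \<Rightarrow> 'b"
  assumes Y0: "Y0 \<subseteq> X0"
    and convex: "\<And>x y. x \<in> Y0 \<Longrightarrow> y \<in> Y0 \<Longrightarrow> set (tpath x y) \<subseteq> Y0"
    and inj: "inj_on g Y0"
begin

lemma is_path_subtree_iff: "is_path Y0 {e\<in>X1. e \<subseteq> Y0} p \<longleftrightarrow> is_path X0 X1 p \<and> set p \<subseteq> Y0"
proof
  assume "is_path X0 X1 p \<and> set p \<subseteq> Y0"
  then show "is_path Y0 {e\<in>X1. e \<subseteq> Y0} p"
    using path_edges_subset by (fastforce simp: is_path_iff)
qed (use Y0 in \<open>auto simp: is_path_iff\<close>)

lemma is_path_image_tpath:
  assumes "x \<in> Y0" "y \<in> Y0"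
  shows "is_path (g ` Y0) (image g ` {e\<in>X1. e \<subseteq> Y0}) (map g (tpath x y))"
proof -
  have "x \<in> X0" "y \<in> X0" using assms Y0 by auto
  then have "is_path Y0 {e\<in>X1. e \<subseteq> Y0} (tpath x y)"
    using is_path_subtree_iff[of "tpath x y"] is_path_tpath convex[OF assms] by simp
  then show ?thesis using is_path_map_iff[OF inj _ convex[OF assms], of "{e\<in>X1. e \<subseteq> Y0}"] by auto
qed

lemma hd_last_map_tpath:
  assumes "x \<in> Y0" "y \<in> Y0"
  shows "hd (map g (tpath x y)) = g x" "last (map g (tpath x y)) = g y"
proof -
  have "x \<in> X0" "y \<in> X0" using assms Y0 by auto
  then show "hd (map g (tpath x y)) = g x" "last (map g (tpath x y)) = g y"
    by (simp_all add: hd_map last_map tpath_not_Nil hd_tpath last_tpath)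
qed

lemma path_image_subtree_eq:
  assumes xy: "x \<in> Y0" "y \<in> Y0"
    and p': "is_path (g ` Y0) (image g ` {e\<in>X1. e \<subseteq> Y0}) p'" "hd p' = g x" "last p' = g y"
  shows "p' = map g (tpath x y)"
proof -
  have p'_cells: "set p' \<subseteq> g ` Y0" and p'_ne: "p' \<noteq> []" using p'(1) by (auto simp: is_path_iff)
  define p where "p = map (inv_into Y0 g) p'"
  have map_p: "map g p = p'" unfolding p_def using p'_cells by (induct p') (auto simp: f_inv_into_f)
  have p_cells: "set p \<subseteq> Y0" unfolding p_def using p'_cells by (auto intro: inv_into_into)
  have "is_path Y0 {e\<in>X1. e \<subseteq> Y0} p"
    using is_path_map_iff[OF inj _ p_cells, of "{e\<in>X1. e \<subseteq> Y0}"] p'(1) map_p by auto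
  then have p: "is_path X0 X1 p" using is_path_subtree_iff by blast
  have p_ne: "p \<noteq> []" using p'_ne map_p by auto
  have "g (hd p) = g x" "g (last p) = g y" using p'(2,3) map_p p_ne by (metis hd_map, metis last_map)
  then have "hd p = x" "last p = y"
    using inj p_cells xy p_ne by (meson hd_in_set last_in_set inj_onD subsetD)+
  then show ?thesis using tpath_eqI[OF p] map_p by simp
qed

lemma is_graph_image_subtree: "is_graph (g ` Y0) (image g ` {e\<in>X1. e \<subseteq> Y0})"
proof -
  have "e' \<subseteq> g ` Y0 \<and> card e' = 2" if "e' \<in> image g ` {e\<in>X1. e \<subseteq> Y0}" for e'
  proof -
    from that obtain e where e: "e' = g ` e" "e \<in> X1" "e \<subseteq> Y0" by blast
    then have "inj_on g e" using inj by (auto intro: inj_on_subset)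
    then show ?thesis using e card_edge[OF e(2)] by (auto simp: card_image)
  qed
  then show ?thesis
    unfolding is_graph_def using finite_subset[OF Y0 finite_cells] finite_edges by auto
qed

lemma is_tree_image_subtree: "is_tree (g ` Y0) (image g ` {e\<in>X1. e \<subseteq> Y0})"
  unfolding is_tree_def
proof (intro conjI ballI is_graph_image_subtree)
  fix x' y' assume "x' \<in> g ` Y0" "y' \<in> g ` Y0"
  then obtain x y where xy: "x \<in> Y0" "y \<in> Y0" "x' = g x" "y' = g y" by blast
  show "\<exists>!p. is_path (g ` Y0) (image g ` {e\<in>X1. e \<subseteq> Y0}) p \<and> hd p = x' \<and> last p = y'"
  proof (rule ex1I)
    show "is_path (g ` Y0) (image g ` {e\<in>X1. e \<subseteq> Y0}) (map g (tpath x y)) \<and>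
        hd (map g (tpath x y)) = x' \<and> last (map g (tpath x y)) = y'"
      using is_path_image_tpath[OF xy(1,2)] hd_last_map_tpath[OF xy(1,2)] xy(3,4) by simp
  qed (use path_image_subtree_eq[OF xy(1,2)] xy(3,4) in simp)
qed

lemma the_path_image_subtree:
  assumes "x \<in> Y0" "y \<in> Y0"
  shows "(THE p. is_path (g ` Y0) (image g ` {e\<in>X1. e \<subseteq> Y0}) p \<and> hd p = g x \<and> last p = g y)
    = map g (tpath x y)"
proof (rule the_equality)
  show "is_path (g ` Y0) (image g ` {e\<in>X1. e \<subseteq> Y0}) (map g (tpath x y)) \<and>
      hd (map g (tpath x y)) = g x \<and> last (map g (tpath x y)) = g y"
    using is_path_image_tpath[OF assms] hd_last_map_tpath[OF assms] by simp
qed (use path_image_subtree_eq[OF assms] in simp)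

end

end

section \<open>Decorated trees\<close>

definition Qprod :: "('a, 'b) dtree_scheme \<Rightarrow> ('a set \<Rightarrow> 'a \<Rightarrow> int) \<Rightarrow> 'a set set \<Rightarrow> 'a \<Rightarrow> int" where
  "Qprod S q F u = (\<Prod>\<epsilon>\<in>{\<epsilon>\<in>Es S. u \<in> \<epsilon> \<and> \<epsilon> \<notin> F}. q \<epsilon> u)"

definition path_weight :: "('a, 'b) dtree_scheme \<Rightarrow> 'a list \<Rightarrow> int" where
  "path_weight S p = (\<Prod>\<epsilon>\<in>incident S p. qpath S \<epsilon> p)"

lemma xval_eq_path_weight: "xval S v \<alpha> = fd S \<alpha> * path_weight S (gam S v \<alpha>)"
  by (simp add: xval_def path_weight_def)

lemma Qprod_cong: "{e\<in>Es S. u \<in> e} \<inter> F = {e\<in>Es S. u \<in> e} \<inter> F' \<Longrightarrow> Qprod S q F u = Qprod S q F' u"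
  unfolding Qprod_def by (rule arg_cong[where f="\<lambda>A. prod _ A"]) blast

lemma Qprod_cong_labels:
  "(\<And>e. e \<in> Es S \<Longrightarrow> u \<in> e \<Longrightarrow> e \<notin> F \<Longrightarrow> q e u = q' e u) \<Longrightarrow> Qprod S q F u = Qprod S q' F u"
  unfolding Qprod_def by (rule prod.cong) auto

lemma Qprod_eq_1: "{e\<in>Es S. u \<in> e} \<subseteq> F \<Longrightarrow> Qprod S q F u = 1"
  unfolding Qprod_def by (rule prod.neutral) auto

lemma Qprod_insert:
  assumes "finite (Es S)" "e \<in> Es S" "u \<in> e" "e \<notin> F"
  shows "Qprod S q F u = q e u * Qprod S q (insert e F) u"
proof -
  have "{\<epsilon>\<in>Es S. u \<in> \<epsilon> \<and> \<epsilon> \<notin> F} = insert e {\<epsilon>\<in>Es S. u \<in> \<epsilon> \<and> \<epsilon> \<notin> insert e F}"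
    using assms by auto
  then show ?thesis unfolding Qprod_def using assms(1) by simp
qed

lemma Qf_eq_Qprod: "Qf S e x = Qprod S (qd S) {e} x"
  unfolding Qf_def Qprod_def by (rule arg_cong[where f="\<lambda>A. prod _ A"]) auto

lemma Qf_upd: "Qf (S\<lparr>qd := q\<rparr>) e x = Qprod S q {e} x"
  unfolding Qf_def Qprod_def by simp

lemma valency_upd [simp]: "valency (S\<lparr>qd := q\<rparr>) = valency S"
  by (simp add: valency_def fun_eq_iff)

lemma cells_upd [simp]: "cells (S\<lparr>qd := q\<rparr>) = cells S"
  by (simp add: cells_def)

lemma gam_upd [simp]: "gam (S\<lparr>qd := q\<rparr>) = gam S"
  by (simp add: gam_def fun_eq_iff)

lemma incident_upd [simp]: "incident (S\<lparr>qd := q\<rparr>) = incident S"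
  by (simp add: incident_def fun_eq_iff)

lemma A0_upd [simp]: "A0 (S\<lparr>qd := q\<rparr>) = A0 S"
  by (simp add: A0_def)

lemma detf_commute: "detf S u v = detf S v u"
  unfolding detf_def by (simp add: insert_commute)

lemma fd_eq_1_if_01: "\<forall>\<alpha>\<in>As S. fd S \<alpha> \<in> {0, 1} \<Longrightarrow> \<alpha> \<in> As S - A0 S \<Longrightarrow> fd S \<alpha> = 1"
  by (auto simp: A0_def)

lemma Nf_eq_sum_path_weight_if_01:
  "\<forall>\<alpha>\<in>As S. fd S \<alpha> \<in> {0, 1} \<Longrightarrow> Nf S v = (\<Sum>\<alpha>\<in>As S - A0 S. path_weight S (gam S v \<alpha>))"
  unfolding Nf_def by (rule sum.cong) (auto simp: xval_eq_path_weight fd_eq_1_if_01)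

lemma Ff_eq_card_if_01: "\<forall>\<alpha>\<in>As S. fd S \<alpha> \<in> {0, 1} \<Longrightarrow> Ff S = int (card (As S - A0 S))"
proof -
  assume f01: "\<forall>\<alpha>\<in>As S. fd S \<alpha> \<in> {0, 1}"
  have "Ff S = (\<Sum>\<alpha>\<in>As S - A0 S. 1)"
    unfolding Ff_def F_arrow_def by (rule sum.cong) (auto simp: fd_eq_1_if_01[OF f01])
  then show ?thesis by simp
qed

locale dtree =
  fixes S :: "('a, 'b) dtree_scheme"
  assumes decorated_tree: "decorated_tree S"
begin

sublocale tree "cells S" "Es S"
  using decorated_tree by unfold_locales (simp add: decorated_tree_def)

lemma gam_eq_tpath: "gam S x y = tpath x y"
  by (simp add: gam_def tpath_def)

lemma decorated_tree_facts:
  "finite (Vs S)" "finite (As S)" "Vs S \<inter> As S = {}"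
  "\<And>\<alpha>. \<alpha> \<in> As S \<Longrightarrow> valency S \<alpha> = 1"
  "\<And>e \<alpha>. e \<in> Es S \<Longrightarrow> \<alpha> \<in> As S \<Longrightarrow> \<alpha> \<in> e \<Longrightarrow> qd S e \<alpha> = 1"
  "\<And>v e e'. v \<in> Vs S \<Longrightarrow> e \<in> Es S \<Longrightarrow> e' \<in> Es S \<Longrightarrow> v \<in> e \<Longrightarrow> v \<in> e' \<Longrightarrow> e \<noteq> e' \<Longrightarrow>
     gcd (qd S e v) (qd S e' v) = 1"
  using decorated_tree unfolding decorated_tree_def by auto

text \<open>Every incident edge meets exactly one cell of the path, since a tree has no chords.\<close>

lemma prod_incident_eq_prod_cells:
  assumes p: "is_path (cells S) (Es S) p"
  shows "(\<Prod>\<epsilon>\<in>incident S p. q \<epsilon> (THE u. u \<in> set p \<and> u \<in> \<epsilon>))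
    = (\<Prod>u\<in>set p. Qprod S q (set (path_edges p)) u)"
proof -
  define A where "A u = {\<epsilon>\<in>Es S. u \<in> \<epsilon> \<and> \<epsilon> \<notin> set (path_edges p)}" for u
  have incident: "incident S p = (\<Union>u\<in>set p. A u)"
    unfolding incident_def A_def by blast
  have unique: "u' = u" if "\<epsilon> \<in> A u" "u \<in> set p" "u' \<in> set p" "u' \<in> \<epsilon>" for \<epsilon> u u'
  proof (rule ccontr)
    assume "u' \<noteq> u"
    with that have "\<epsilon> = {u, u'}" by (intro edge_eq_of_mem) (auto simp: A_def)
    with that show False using edge_in_path_edges[OF p] by (auto simp: A_def)
  qed
  have disjoint: "\<forall>i\<in>set p. \<forall>j\<in>set p. i \<noteq> j \<longrightarrow> A i \<inter> A j = {}"
    using unique by (auto simp: A_def)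
  have "(\<Prod>\<epsilon>\<in>incident S p. q \<epsilon> (THE u. u \<in> set p \<and> u \<in> \<epsilon>))
      = (\<Prod>u\<in>set p. \<Prod>\<epsilon>\<in>A u. q \<epsilon> (THE u. u \<in> set p \<and> u \<in> \<epsilon>))"
    unfolding incident using finite_edges disjoint by (intro prod.UNION_disjoint) (auto simp: A_def)
  also have "\<dots> = (\<Prod>u\<in>set p. \<Prod>\<epsilon>\<in>A u. q \<epsilon> u)"
  proof (intro prod.cong refl)
    fix u \<epsilon> assume "u \<in> set p" "\<epsilon> \<in> A u"
    then have "(THE u'. u' \<in> set p \<and> u' \<in> \<epsilon>) = u"
      using unique by (intro the_equality) (auto simp: A_def)
    then show "q \<epsilon> (THE u. u \<in> set p \<and> u \<in> \<epsilon>) = q \<epsilon> u" by simp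
  qed
  finally show ?thesis by (simp add: Qprod_def A_def)
qed

lemma path_weight_eq_prod_cells:
  "is_path (cells S) (Es S) p \<Longrightarrow> path_weight S p = (\<Prod>u\<in>set p. Qprod S (qd S) (set (path_edges p)) u)"
  unfolding path_weight_def qpath_def using prod_incident_eq_prod_cells[of p "qd S"] by simp

lemma path_weight_upd_eq_prod_cells:
  "is_path (cells S) (Es S) p \<Longrightarrow>
    path_weight (S\<lparr>qd := q\<rparr>) p = (\<Prod>u\<in>set p. Qprod S q (set (path_edges p)) u)"
  unfolding path_weight_def qpath_def using prod_incident_eq_prod_cells[of p q] by simp

lemma path_weight_rev: "is_path (cells S) (Es S) p \<Longrightarrow> path_weight S (rev p) = path_weight S p"
  using path_weight_eq_prod_cells[of p] path_weight_eq_prod_cells[of "rev p"] by (simp add: path_edges_rev)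

end

section \<open>Rooted decorated trees\<close>

locale rooted_dtree = dtree +
  fixes r :: 'a
  assumes root_in_cells: "r \<in> cells S"
begin

abbreviation rpath :: "'a \<Rightarrow> 'a list" where
  "rpath x \<equiv> tpath r x"

definition parent :: "'a \<Rightarrow> 'a" where
  "parent x = last (butlast (rpath x))"

definition up_edge :: "'a \<Rightarrow> 'a set" where
  "up_edge x = {parent x, x}"

definition down_edges :: "'a \<Rightarrow> 'a set set" where
  "down_edges y = {e\<in>Es S. y \<in> e \<and> e \<noteq> up_edge y}"

definition root_weight :: "'a \<Rightarrow> int" where
  "root_weight y = path_weight S (rpath y)"

lemma is_path_rpath: "x \<in> cells S \<Longrightarrow> is_path (cells S) (Es S) (rpath x)"
  and hd_rpath: "x \<in> cells S \<Longrightarrow> hd (rpath x) = r"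
  and last_rpath: "x \<in> cells S \<Longrightarrow> last (rpath x) = x"
  and rpath_not_Nil: "x \<in> cells S \<Longrightarrow> rpath x \<noteq> []"
  and set_rpath_subset: "x \<in> cells S \<Longrightarrow> set (rpath x) \<subseteq> cells S"
  and distinct_rpath: "x \<in> cells S \<Longrightarrow> distinct (rpath x)"
  using is_path_tpath hd_tpath last_tpath tpath_not_Nil set_tpath_subset distinct_tpath root_in_cells
  by blast+

lemma rpath_root: "rpath r = [r]"
  using tpath_refl root_in_cells by blast

lemma root_in_rpath: "x \<in> cells S \<Longrightarrow> r \<in> set (rpath x)"
  using hd_rpath rpath_not_Nil hd_in_set by metis

lemma in_rpath: "x \<in> cells S \<Longrightarrow> x \<in> set (rpath x)"
  using last_rpath rpath_not_Nil last_in_set by metis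

lemma in_up_edge: "x \<in> up_edge x" and parent_in_up_edge: "parent x \<in> up_edge x"
  by (auto simp: up_edge_def)

lemma rpath_parent:
  assumes x: "x \<in> cells S" and xr: "x \<noteq> r"
  shows "rpath x = rpath (parent x) @ [x] \<and> parent x \<in> cells S \<and> x \<notin> set (rpath (parent x)) \<and>
    up_edge x \<in> Es S"
proof -
  define bl where "bl = butlast (rpath x)"
  have rx: "rpath x = bl @ [x]"
    using rpath_not_Nil[OF x] last_rpath[OF x] append_butlast_last_id bl_def by metis
  have bl_ne: "bl \<noteq> []"
    using rx hd_rpath[OF x] xr by (cases bl) auto
  then have "rpath x = butlast bl @ last bl # [x]" using rx by simp
  then have r_last: "rpath (last bl) = butlast bl @ [last bl]"
    using tpath_prefix[OF root_in_cells x] by blast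
  have parent: "parent x = last bl" using bl_def parent_def by simp
  have "last bl \<in> cells S" using set_rpath_subset[OF x] rx bl_ne by auto
  moreover have "x \<notin> set bl" using distinct_rpath[OF x] rx by simp
  moreover have "{last bl, x} \<in> Es S"
    using path_edges_tpath_subset[OF root_in_cells x] rx bl_ne by (auto simp: path_edges_snoc)
  ultimately show ?thesis using rx r_last bl_ne parent by (simp add: up_edge_def)
qed

lemma rpath_snoc: "x \<in> cells S \<Longrightarrow> x \<noteq> r \<Longrightarrow> rpath x = rpath (parent x) @ [x]"
  and parent_in_cells: "x \<in> cells S \<Longrightarrow> x \<noteq> r \<Longrightarrow> parent x \<in> cells S"
  and notin_rpath_parent: "x \<in> cells S \<Longrightarrow> x \<noteq> r \<Longrightarrow> x \<notin> set (rpath (parent x))"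
  and up_edge_in_edges: "x \<in> cells S \<Longrightarrow> x \<noteq> r \<Longrightarrow> up_edge x \<in> Es S"
  using rpath_parent by blast+

lemma parent_neq: "x \<in> cells S \<Longrightarrow> x \<noteq> r \<Longrightarrow> parent x \<noteq> x"
  using notin_rpath_parent in_rpath parent_in_cells by metis

lemma parent_induct [consumes 2, case_names step]:
  assumes "x \<in> cells S" "x \<noteq> r"
    and "\<And>x. x \<in> cells S \<Longrightarrow> x \<noteq> r \<Longrightarrow> (parent x \<noteq> r \<Longrightarrow> P (parent x)) \<Longrightarrow> P x"
  shows "P x"
  using assms(1,2)
proof (induct "length (rpath x)" arbitrary: x rule: less_induct)
  case less
  then show ?case
    using assms(3) parent_in_cells rpath_snoc[of x] by (metis length_append_singleton lessI)
qed

lemma path_edges_rpath: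
  "x \<in> cells S \<Longrightarrow> x \<noteq> r \<Longrightarrow> set (path_edges (rpath x)) = insert (up_edge x) (set (path_edges (rpath (parent x))))"
  using rpath_snoc[of x] rpath_not_Nil[OF parent_in_cells, of x] last_rpath[OF parent_in_cells, of x]
  by (simp add: path_edges_snoc up_edge_def)

lemma path_edges_rpath_at:
  assumes "x \<in> cells S" "x \<noteq> r"
  shows "{e\<in>Es S. x \<in> e} \<inter> set (path_edges (rpath x)) = {up_edge x}"
proof -
  have "e \<notin> set (path_edges (rpath (parent x)))" if "x \<in> e" for e
    using that notin_rpath_parent[OF assms] path_edges_subset by blast
  then show ?thesis using path_edges_rpath[OF assms] up_edge_in_edges[OF assms] in_up_edge by auto
qed

lemma obtain_child:
  assumes e: "e \<in> Es S" and y: "y \<in> e" and not_up: "y = r \<or> e \<noteq> up_edge y"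
  obtains c where "e = {y, c}" "c \<in> cells S" "c \<noteq> r" "parent c = y" "up_edge c = e" "c \<noteq> y"
proof -
  obtain c where ec: "e = {y, c}" "y \<noteq> c" using edge_eq_doubleton[OF e y] by blast
  have yc: "y \<in> cells S" "c \<in> cells S" using edge_ends_in_cells e ec by auto
  have c_notin: "c \<notin> set (rpath y)"
  proof
    assume "c \<in> set (rpath y)"
    then have e_in: "e \<in> set (path_edges (rpath y))"
      using edge_in_path_edges[OF is_path_rpath[OF yc(1)]] e ec in_rpath[OF yc(1)] by simp
    show False
    proof (cases "y = r")
      case True
      then show False using e_in rpath_root by simp
    next
      case False
      then have "e \<in> set (path_edges (rpath (parent y)))"
        using e_in not_up path_edges_rpath[OF yc(1)] by simp
      then show False using path_edges_subset y notin_rpath_parent[OF yc(1) False] by blast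
    qed
  qed
  have rc: "rpath c = rpath y @ [c]"
    using tpath_snoc[OF root_in_cells yc(1), of c] e ec c_notin by simp
  have "c \<noteq> r" using c_notin root_in_rpath[OF yc(1)] by blast
  moreover have "parent c = y" unfolding parent_def using rc last_rpath[OF yc(1)] by simp
  ultimately show ?thesis using that[of c] ec yc by (simp add: up_edge_def insert_commute)
qed

lemma up_edge_inj:
  assumes x: "x \<in> cells S" "x \<noteq> r" and x': "x' \<in> cells S" "x' \<noteq> r" and eq: "up_edge x = up_edge x'"
  shows "x = x'"
proof (rule ccontr)
  assume ne: "x \<noteq> x'"
  have "x \<in> up_edge x'" "x' \<in> up_edge x" using eq in_up_edge by metis+
  then have "parent x' = x" "parent x = x'" using ne by (auto simp: up_edge_def)
  then have "length (rpath x) = length (rpath x') + 1" "length (rpath x') = length (rpath x) + 1"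
    using rpath_snoc[OF x] rpath_snoc[OF x'] by simp_all
  then show False by simp
qed

lemma ex_up_edge_eq: "e \<in> Es S \<Longrightarrow> \<exists>c. c \<in> cells S \<and> c \<noteq> r \<and> up_edge c = e"
proof -
  assume e: "e \<in> Es S"
  obtain a where a: "a \<in> e" using card_edge[OF e] by fastforce
  show ?thesis
  proof (cases "a = r \<or> e \<noteq> up_edge a")
    case True
    then show ?thesis using obtain_child[OF e a] by metis
  next
    case False
    then show ?thesis using a e edge_subset by blast
  qed
qed

lemma up_edge_in_path_edges_rpath:
  assumes x: "x \<in> cells S" and u: "u \<in> set (rpath x)" and ur: "u \<noteq> r"
  shows "up_edge u \<in> set (path_edges (rpath x))"
proof -
  obtain xs ys where rx: "rpath x = xs @ u # ys" using split_list[OF u] by blast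
  then have ru: "rpath u = xs @ [u]" using tpath_prefix[OF root_in_cells x] by blast
  have "u \<in> cells S" using u set_rpath_subset[OF x] by blast
  then have "up_edge u \<in> set (path_edges (rpath u))" using path_edges_rpath[OF _ ur] by simp
  moreover have "set (path_edges (rpath u)) \<subseteq> set (path_edges (rpath x))"
  proof (cases ys)
    case (Cons z zs)
    then show ?thesis using rx ru path_edges_append[of "xs @ [u]" "z # zs"] by auto
  qed (use rx ru in simp)
  ultimately show ?thesis by blast
qed

lemma finite_down_edges: "finite (down_edges y)"
  using finite_edges by (simp add: down_edges_def)

lemma down_edges_eq:
  "y \<in> cells S \<Longrightarrow> y \<noteq> r \<Longrightarrow> down_edges y = {e\<in>Es S. y \<in> e \<and> e \<notin> set (path_edges (rpath y))}"
  using path_edges_rpath_at[of y] by (auto simp: down_edges_def)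

lemma valency_eq_card_down_edges: "y \<in> cells S \<Longrightarrow> y \<noteq> r \<Longrightarrow> valency S y = card (down_edges y) + 1"
proof -
  assume y: "y \<in> cells S" "y \<noteq> r"
  have "{e\<in>Es S. y \<in> e} = insert (up_edge y) (down_edges y)"
    using up_edge_in_edges[OF y] in_up_edge by (auto simp: down_edges_def)
  moreover have "up_edge y \<notin> down_edges y" by (simp add: down_edges_def)
  ultimately show ?thesis using finite_down_edges by (simp add: valency_def)
qed

lemma Qprod_rpath_self:
  "y \<in> cells S \<Longrightarrow> y \<noteq> r \<Longrightarrow> Qprod S q (set (path_edges (rpath y))) y = Qprod S q {up_edge y} y"
  by (rule Qprod_cong) (use path_edges_rpath_at[of y] up_edge_in_edges[of y] in_up_edge[of y] in auto)

lemma up_edge_parent_neq: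
  assumes "c \<in> cells S" "c \<noteq> r" "parent c \<noteq> r"
  shows "up_edge (parent c) \<noteq> up_edge c"
  using up_edge_inj[OF parent_in_cells[OF assms(1,2)] assms(3) assms(1,2)] parent_neq[OF assms(1,2)] by blast

lemma detf_upd_up_edge:
  assumes c: "c \<in> cells S" "c \<noteq> r" "parent c \<noteq> r"
  shows "detf (S\<lparr>qd := q\<rparr>) (parent c) c = q (up_edge c) (parent c) * q (up_edge c) c
    - q (up_edge (parent c)) (parent c) * Qprod S q {up_edge (parent c), up_edge c} (parent c)
      * Qprod S q {up_edge c} c"
proof -
  have "up_edge (parent c) \<notin> {up_edge c}" using up_edge_parent_neq[OF c] by simp
  then have "Qprod S q {up_edge c} (parent c)
      = q (up_edge (parent c)) (parent c) * Qprod S q {up_edge (parent c), up_edge c} (parent c)"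
    using Qprod_insert[OF finite_edges up_edge_in_edges[OF parent_in_cells[OF c(1,2)] c(3)] in_up_edge]
    by (simp add: insert_commute)
  then show ?thesis unfolding detf_def Qf_upd by (simp add: up_edge_def[of c, symmetric])
qed

end

section \<open>The tree \<open>S\<^sup>(\<eta>)\<close> for a central arrow\<close>

lemma gcd_diff_dvd_left: "(b::int) dvd s \<Longrightarrow> gcd (s - a) b = gcd a b"
  by (metis (no_types, lifting) ext gcd.left_commute gcd_abs2_int gcd_diff2 gcd_proj1_if_dvd_int)

text \<open>The centrality condition is the root condition of \<^const>\<open>is_root\<close> at an arrow \<open>\<eta>\<close>; we
  work with \<open>\<eta>\<close> as the root \<open>r\<close> of the rooted tree.\<close>

locale central_arrow = rooted_dtree S r for S :: "('a, 'b) dtree_scheme" and r +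
  assumes root_arrow: "r \<in> As S"
    and central: "\<forall>y\<in>Vs S. (\<forall>e\<in>Es S. y \<in> e \<and> e \<notin> set (path_edges (gam S r y)) \<longrightarrow> qd S e y \<ge> 1) \<and>
         card {e\<in>Es S. y \<in> e \<and> e \<notin> set (path_edges (gam S r y)) \<and> qd S e y \<noteq> 1} \<le> 1"
begin

lemma root_notin_Vs: "r \<notin> Vs S"
  using decorated_tree_facts(3) root_arrow by blast

lemma Vs_in_cells: "x \<in> Vs S \<Longrightarrow> x \<in> cells S \<and> x \<noteq> r"
  using root_notin_Vs by (auto simp: cells_def)

lemma root_edge_unique: "e \<in> Es S \<Longrightarrow> r \<in> e \<Longrightarrow> e' \<in> Es S \<Longrightarrow> r \<in> e' \<Longrightarrow> e = e'"
  using decorated_tree_facts(4)[OF root_arrow]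
  by (metis (mono_tags, lifting) card_1_singletonE mem_Collect_eq singletonD valency_def)

lemma down_edges_arrow: "y \<in> As S \<Longrightarrow> y \<noteq> r \<Longrightarrow> down_edges y = {}"
  using valency_eq_card_down_edges[of y] decorated_tree_facts(4)[of y] finite_down_edges
  by (auto simp: cells_def)

lemma up_edge_in_down_edges_parent:
  "c \<in> cells S \<Longrightarrow> c \<noteq> r \<Longrightarrow> parent c \<noteq> r \<Longrightarrow> up_edge c \<in> down_edges (parent c)"
  using up_edge_parent_neq up_edge_in_edges parent_in_up_edge by (auto simp: down_edges_def)

lemma parent_in_Vs: "c \<in> cells S \<Longrightarrow> c \<noteq> r \<Longrightarrow> parent c \<noteq> r \<Longrightarrow> parent c \<in> Vs S"
  using up_edge_in_down_edges_parent down_edges_arrow parent_in_cells by (fastforce simp: cells_def)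

lemma central_down_edges:
  "y \<in> Vs S \<Longrightarrow> (\<forall>e\<in>down_edges y. qd S e y \<ge> 1) \<and> card {e\<in>down_edges y. qd S e y \<noteq> 1} \<le> 1"
proof -
  assume y: "y \<in> Vs S"
  then have "down_edges y = {e\<in>Es S. y \<in> e \<and> e \<notin> set (path_edges (gam S r y))}"
    using down_edges_eq Vs_in_cells by (simp add: gam_eq_tpath)
  moreover from this have "{e\<in>down_edges y. qd S e y \<noteq> 1}
      = {e\<in>Es S. y \<in> e \<and> e \<notin> set (path_edges (gam S r y)) \<and> qd S e y \<noteq> 1}"
    by auto
  ultimately show ?thesis using central y by auto
qed

lemma root_edges_eq: "c \<in> cells S \<Longrightarrow> c \<noteq> r \<Longrightarrow> parent c = r \<Longrightarrow> {e\<in>Es S. r \<in> e} = {up_edge c}"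
proof -
  assume c: "c \<in> cells S" "c \<noteq> r" "parent c = r"
  have "up_edge c \<in> Es S" "r \<in> up_edge c" using up_edge_in_edges[OF c(1,2)] parent_in_up_edge[of c] c(3) by auto
  then show ?thesis using root_edge_unique by blast
qed

text \<open>In the notation of the header, \<open>G = anc_weight\<close> and \<open>Q G\<^sup>2 = up_sum\<close>; the tree \<open>S\<^sup>(\<eta>)\<close> only
  relabels the up edges at vertices, where \<open>q + q\<^sup>* = up_sum\<close>.\<close>

definition Qup :: "'a \<Rightarrow> int" where
  "Qup y = Qprod S (qd S) {up_edge y} y"

definition anc_weight :: "'a \<Rightarrow> int" where
  "anc_weight y = (\<Prod>u\<in>set (rpath y) - {y}. Qprod S (qd S) (set (path_edges (rpath y))) u)"

definition up_sum :: "'a \<Rightarrow> int" where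
  "up_sum y = Qup y * (anc_weight y)\<^sup>2"

definition qstar :: "'a set \<Rightarrow> 'a \<Rightarrow> int" where
  "qstar e x = (if e \<in> Es S \<and> x \<in> e then
     (if x \<in> Vs S \<and> e = up_edge x then up_sum x - qd S e x else qd S e x) else 0)"

lemma Qup_eq_prod_down_edges: "Qup y = (\<Prod>e\<in>down_edges y. qd S e y)"
  unfolding Qup_def Qprod_def down_edges_def by (rule arg_cong[where f="\<lambda>A. prod _ A"]) auto

lemma Qup_eq_Qf: "Qup y = Qf S (up_edge y) y"
  by (simp add: Qup_def Qf_eq_Qprod)

lemma root_weight_eq: "y \<in> cells S \<Longrightarrow> y \<noteq> r \<Longrightarrow> root_weight y = anc_weight y * Qup y"
proof -
  assume y: "y \<in> cells S" "y \<noteq> r"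
  have "root_weight y = (\<Prod>u\<in>set (rpath y). Qprod S (qd S) (set (path_edges (rpath y))) u)"
    unfolding root_weight_def by (rule path_weight_eq_prod_cells[OF is_path_rpath[OF y(1)]])
  also have "\<dots> = Qprod S (qd S) (set (path_edges (rpath y))) y * anc_weight y"
    unfolding anc_weight_def using prod.remove[of "set (rpath y)" y] in_rpath[OF y(1)] by simp
  finally show ?thesis using Qprod_rpath_self[OF y] by (simp add: Qup_def)
qed

lemma anc_weight_top: "c \<in> cells S \<Longrightarrow> c \<noteq> r \<Longrightarrow> parent c = r \<Longrightarrow> anc_weight c = 1"
proof -
  assume c: "c \<in> cells S" "c \<noteq> r" "parent c = r"
  have "set (rpath c) - {c} = {r}" using rpath_snoc[OF c(1,2)] c rpath_root by auto
  moreover have "Qprod S (qd S) (set (path_edges (rpath c))) r = 1"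
    by (rule Qprod_eq_1) (use root_edges_eq[OF c] path_edges_rpath[OF c(1,2)] in auto)
  ultimately show ?thesis unfolding anc_weight_def by simp
qed

lemma up_sum_top: "c \<in> cells S \<Longrightarrow> c \<noteq> r \<Longrightarrow> parent c = r \<Longrightarrow> up_sum c = Qup c"
  by (simp add: up_sum_def anc_weight_top)

lemma anc_weight_step:
  assumes c: "c \<in> cells S" "c \<noteq> r" "parent c \<noteq> r"
  shows "anc_weight c = anc_weight (parent c) * Qprod S (qd S) {up_edge (parent c), up_edge c} (parent c)"
proof -
  let ?z = "parent c" and ?E = "set (path_edges (rpath c))"
  have z: "?z \<in> cells S" "?z \<noteq> r" using parent_in_cells[OF c(1,2)] c(3) by auto
  have E: "?E = insert (up_edge c) (set (path_edges (rpath ?z)))" using path_edges_rpath[OF c(1,2)] .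
  have above: "Qprod S (qd S) ?E u = Qprod S (qd S) (set (path_edges (rpath ?z))) u"
    if "u \<in> set (rpath ?z) - {?z}" for u
  proof -
    have "u \<notin> up_edge c" using that notin_rpath_parent[OF c(1,2)] by (auto simp: up_edge_def)
    then show ?thesis unfolding E by (intro Qprod_cong) auto
  qed
  have at_parent: "Qprod S (qd S) ?E ?z = Qprod S (qd S) {up_edge ?z, up_edge c} ?z"
    unfolding E by (rule Qprod_cong)
      (use path_edges_rpath_at[OF z] up_edge_in_edges[OF c(1,2)] parent_in_up_edge[of c] in auto)
  have "anc_weight c = (\<Prod>u\<in>set (rpath ?z). Qprod S (qd S) ?E u)"
    unfolding anc_weight_def using rpath_snoc[OF c(1,2)] notin_rpath_parent[OF c(1,2)]
    by (simp add: insert_Diff_if)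
  also have "\<dots> = Qprod S (qd S) ?E ?z * (\<Prod>u\<in>set (rpath ?z) - {?z}. Qprod S (qd S) ?E u)"
    using prod.remove[of "set (rpath ?z)" ?z] in_rpath[OF z(1)] by simp
  also have "(\<Prod>u\<in>set (rpath ?z) - {?z}. Qprod S (qd S) ?E u) = anc_weight ?z"
    unfolding anc_weight_def using above by (intro prod.cong) auto
  finally show ?thesis using at_parent by simp
qed

lemma Qup_parent_eq:
  assumes "c \<in> cells S" "c \<noteq> r" "parent c \<noteq> r"
  shows "Qup (parent c) = qd S (up_edge c) (parent c) * Qprod S (qd S) {up_edge (parent c), up_edge c} (parent c)"
  using up_edge_parent_neq[OF assms]
    Qprod_insert[OF finite_edges up_edge_in_edges[OF assms(1,2)] parent_in_up_edge, of "{up_edge (parent c)}"]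
  by (simp add: Qup_def insert_commute)

lemma root_weight_step:
  assumes "c \<in> cells S" "c \<noteq> r" "parent c \<noteq> r"
  shows "qd S (up_edge c) (parent c) * root_weight c = root_weight (parent c) * Qup c"
  using root_weight_eq[OF assms(1,2)] root_weight_eq[OF parent_in_cells[OF assms(1,2)] assms(3)]
    anc_weight_step[OF assms] Qup_parent_eq[OF assms]
  by (simp add: algebra_simps)

lemma up_sum_step:
  assumes "c \<in> cells S" "c \<noteq> r" "parent c \<noteq> r"
  shows "qd S (up_edge c) (parent c) * up_sum c
    = up_sum (parent c) * Qprod S (qd S) {up_edge (parent c), up_edge c} (parent c) * Qup c"
  unfolding up_sum_def anc_weight_step[OF assms] Qup_parent_eq[OF assms]
  by (simp add: power2_eq_square algebra_simps)

end

context central_arrow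
begin

lemma qstar_off_up_edge: "e \<in> Es S \<Longrightarrow> x \<in> e \<Longrightarrow> x \<notin> Vs S \<or> e \<noteq> up_edge x \<Longrightarrow> qstar e x = qd S e x"
  by (auto simp: qstar_def)

lemma qstar_up_edge: "x \<in> Vs S \<Longrightarrow> qstar (up_edge x) x = up_sum x - qd S (up_edge x) x"
  using up_edge_in_edges[of x] Vs_in_cells[of x] in_up_edge[of x] by (simp add: qstar_def)

lemma qstar_outside: "\<not> (e \<in> Es S \<and> x \<in> e) \<Longrightarrow> qstar e x = 0"
  unfolding qstar_def by presburger

lemma Qprod_qstar_off_up_edge:
  "up_edge x \<in> F \<or> x \<notin> Vs S \<Longrightarrow> Qprod S qstar F x = Qprod S (qd S) F x"
  by (rule Qprod_cong_labels) (metis qstar_off_up_edge)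

lemma gcd_qstar_up_edge:
  assumes v: "v \<in> Vs S" and e: "e \<in> down_edges v"
  shows "gcd (qstar (up_edge v) v) (qstar e v) = 1"
proof -
  have "qd S e v dvd Qup v"
    unfolding Qup_eq_prod_down_edges by (rule dvd_prodI[OF finite_down_edges e])
  then have "qd S e v dvd up_sum v" by (simp add: up_sum_def)
  moreover have "gcd (qd S (up_edge v) v) (qd S e v) = 1"
    using decorated_tree_facts(6)[OF v up_edge_in_edges _ in_up_edge] e Vs_in_cells[OF v]
    by (auto simp: down_edges_def)
  moreover have "qstar e v = qd S e v"
    using e qstar_off_up_edge[of e v] by (simp add: down_edges_def)
  ultimately show ?thesis using qstar_up_edge[OF v] gcd_diff_dvd_left by simp
qed

lemma decorated_tree_qstar: "decorated_tree (S\<lparr>qd := qstar\<rparr>)"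
proof -
  have arrows: "qstar e \<alpha> = 1" if "e \<in> Es S" "\<alpha> \<in> As S" "\<alpha> \<in> e" for e \<alpha>
  proof -
    have "\<alpha> \<notin> Vs S" using decorated_tree_facts(3) that(2) by blast
    then show ?thesis using qstar_off_up_edge[OF that(1,3)] decorated_tree_facts(5)[OF that] by simp
  qed
  have coprime: "gcd (qstar e v) (qstar e' v) = 1"
    if v: "v \<in> Vs S" and e: "e \<in> Es S" "e' \<in> Es S" "v \<in> e" "v \<in> e'" "e \<noteq> e'" for v e e'
  proof -
    consider "e = up_edge v" | "e' = up_edge v" | "e \<noteq> up_edge v" "e' \<noteq> up_edge v" by blast
    then show ?thesis
    proof cases
      case 1
      then show ?thesis using gcd_qstar_up_edge[OF v, of e'] e by (simp add: down_edges_def)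
    next
      case 2
      then show ?thesis using gcd_qstar_up_edge[OF v, of e] e by (simp add: down_edges_def gcd.commute)
    next
      case 3
      then show ?thesis using qstar_off_up_edge e decorated_tree_facts(6)[OF v e] by auto
    qed
  qed
  show ?thesis
    using decorated_tree decorated_tree_facts arrows coprime unfolding decorated_tree_def by simp
qed

lemma up_edge_root_edge: "v \<in> Vs S \<Longrightarrow> {r, v} \<in> Es S \<Longrightarrow> up_edge v = {r, v} \<and> parent v = r"
proof -
  assume v: "v \<in> Vs S" and e: "{r, v} \<in> Es S"
  have vc: "v \<in> cells S" "v \<noteq> r" using Vs_in_cells[OF v] by auto
  have "{r, v} = up_edge v"
  proof (rule ccontr)
    assume "{r, v} \<noteq> up_edge v"
    then have "v = r \<or> {r, v} \<noteq> up_edge v" by simp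
    then obtain c where "{r, v} = {v, c}" "c \<noteq> r" "c \<noteq> v"
      using obtain_child[OF e insertI2[OF singletonI]] by metis
    then show False by (auto simp: doubleton_eq_iff)
  qed
  moreover from this have "parent v = r" using parent_neq[OF vc] by (auto simp: up_edge_def doubleton_eq_iff)
  ultimately show ?thesis by simp
qed

text \<open>The determinant condition holds because \<open>q + q\<^sup>* = up_sum\<close> on up edges and \<open>up_sum\<close> satisfies
  the recursion \<open>up_sum_step\<close>.\<close>

lemma detf_qstar_parent:
  assumes c: "c \<in> Vs S" and z: "parent c \<in> Vs S"
  shows "detf (S\<lparr>qd := qstar\<rparr>) (parent c) c = - detf S (parent c) c"
proof -
  let ?z = "parent c" and ?e = "up_edge c"
  let ?W = "Qprod S (qd S) {up_edge ?z, ?e} ?z"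
  have cc: "c \<in> cells S" "c \<noteq> r" "parent c \<noteq> r" using Vs_in_cells c z by auto
  have e_ne: "?e \<noteq> up_edge ?z" using up_edge_parent_neq[OF cc] by simp
  have "detf S ?z c = qd S ?e ?z * qd S ?e c - qd S (up_edge ?z) ?z * ?W * Qup c"
    using detf_upd_up_edge[OF cc, of "qd S"] by (simp add: Qup_def)
  moreover have "detf (S\<lparr>qd := qstar\<rparr>) ?z c
      = qd S ?e ?z * (up_sum c - qd S ?e c) - (up_sum ?z - qd S (up_edge ?z) ?z) * ?W * Qup c"
    using detf_upd_up_edge[OF cc, of qstar] e_ne up_edge_in_edges[OF cc(1,2)] parent_in_up_edge[of c]
      qstar_off_up_edge qstar_up_edge[OF c] qstar_up_edge[OF z] Qprod_qstar_off_up_edge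
    by (simp add: Qup_def)
  ultimately show ?thesis using up_sum_step[OF cc] by (simp add: algebra_simps)
qed

lemma detf_qstar:
  assumes u: "u \<in> Vs S" and v: "v \<in> Vs S" and e: "{u, v} \<in> Es S"
  shows "detf (S\<lparr>qd := qstar\<rparr>) u v = - detf S u v"
proof -
  obtain c where c: "c \<in> cells S" "c \<noteq> r" "up_edge c = {u, v}" using ex_up_edge_eq[OF e] by blast
  have "u \<noteq> v" using edge_ends_distinct[OF e] .
  with c in_up_edge[of c] have "c = u \<and> parent u = v \<or> c = v \<and> parent v = u"
    by (auto simp: up_edge_def doubleton_eq_iff)
  then show ?thesis using detf_qstar_parent u v detf_commute by metis
qed

lemma star_cond_qstar: "star_cond S r qstar"
proof -
  have root_edge: "qstar {r, v} v = Qf S {r, v} v - qd S {r, v} v" if "v \<in> Vs S" "{r, v} \<in> Es S" for v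
    using up_edge_root_edge[OF that] qstar_up_edge[OF that(1)] up_sum_top Vs_in_cells[OF that(1)] Qup_eq_Qf
    by metis
  have off_path: "qstar e v = qd S e v"
    if "v \<in> Vs S - {r}" "e \<in> Es S" "v \<in> e" "e \<notin> set (path_edges (gam S r v))" for v e
    using that path_edges_rpath[of v] Vs_in_cells[of v] qstar_off_up_edge by (auto simp: gam_eq_tpath)
  show ?thesis unfolding star_cond_def
    using decorated_tree_qstar qstar_outside qstar_off_up_edge root_notin_Vs off_path root_edge detf_qstar
    by auto
qed

context
  fixes q' :: "'a set \<Rightarrow> 'a \<Rightarrow> int"
  assumes star_cond: "star_cond S r q'"
begin

lemma star_cond_off_up_edge:
  assumes e: "e \<in> Es S" "x \<in> e" and off: "x \<notin> Vs S \<or> e \<noteq> up_edge x"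
  shows "q' e x = qd S e x"
proof -
  have x: "x \<in> cells S" using e edge_subset by blast
  consider "x = r" | "x \<in> As S" "x \<noteq> r" | "x \<in> Vs S" "e \<noteq> up_edge x"
    using x off by (auto simp: cells_def)
  then show ?thesis
  proof cases
    case 1
    then show ?thesis using star_cond e by (simp add: star_cond_def)
  next
    case 2
    then have "q' e x = 1" using star_cond e by (simp add: star_cond_def decorated_tree_def)
    then show ?thesis using decorated_tree_facts(5) e 2 by simp
  next
    case 3
    then have "e \<notin> set (path_edges (gam S r x))"
      using path_edges_rpath_at[of x] Vs_in_cells[of x] e by (auto simp: gam_eq_tpath)
    then show ?thesis using star_cond e 3 Vs_in_cells[of x] by (simp add: star_cond_def)
  qed
qed

lemma Qprod_star_cond_off_up_edge: "up_edge x \<in> F \<or> x \<notin> Vs S \<Longrightarrow> Qprod S q' F x = Qprod S qstar F x"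
  by (rule Qprod_cong_labels) (metis star_cond_off_up_edge qstar_off_up_edge)

lemma star_cond_up_edge_top:
  assumes x: "x \<in> Vs S" and top: "parent x = r"
  shows "q' (up_edge x) x = qstar (up_edge x) x"
proof -
  have "up_edge x = {r, x}" using top by (simp add: up_edge_def)
  moreover have "{r, x} \<in> Es S" using up_edge_in_edges Vs_in_cells[OF x] calculation by metis
  ultimately show ?thesis
    using star_cond x qstar_up_edge[OF x] up_sum_top[OF _ _ top] Vs_in_cells[OF x] Qup_eq_Qf
    by (simp add: star_cond_def)
qed

text \<open>Going down from the parent, the determinant condition on the up edge determines \<open>q'\<close>,
  because \<open>q(up_edge x, parent x) \<ge> 1\<close> by centrality.\<close>

lemma star_cond_up_edge_step:
  assumes x: "x \<in> Vs S" and not_top: "parent x \<noteq> r"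
    and parent: "q' (up_edge (parent x)) (parent x) = qstar (up_edge (parent x)) (parent x)"
  shows "q' (up_edge x) x = qstar (up_edge x) x"
proof -
  let ?z = "parent x" and ?e = "up_edge x"
  have xc: "x \<in> cells S" "x \<noteq> r" using Vs_in_cells[OF x] by auto
  have z: "?z \<in> Vs S" using parent_in_Vs[OF xc not_top] .
  have e_down: "?e \<in> down_edges ?z" using up_edge_in_down_edges_parent[OF xc not_top] .
  then have e_ne: "?e \<noteq> up_edge ?z" and e: "?e \<in> Es S" "?z \<in> ?e" by (auto simp: down_edges_def)
  have "detf (S\<lparr>qd := q'\<rparr>) ?z x = detf (S\<lparr>qd := qstar\<rparr>) ?z x"
    using star_cond detf_qstar_parent[OF x z] x z xc up_edge_in_edges[OF xc] root_notin_Vs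
    by (simp add: star_cond_def up_edge_def)
  then have "qd S ?e ?z * q' ?e x = qd S ?e ?z * qstar ?e x"
    using detf_upd_up_edge[OF xc not_top, of q'] detf_upd_up_edge[OF xc not_top, of qstar] parent
      star_cond_off_up_edge[OF e] qstar_off_up_edge[OF e] e_ne
      Qprod_star_cond_off_up_edge[of x "{?e}"] Qprod_star_cond_off_up_edge[of ?z "{up_edge ?z, ?e}"]
    by simp
  moreover have "qd S ?e ?z \<ge> 1" using central_down_edges[OF z] e_down by blast
  ultimately show ?thesis by simp
qed

lemma star_cond_unique: "q' = qstar"
proof (intro ext)
  fix e x
  have up: "x \<in> Vs S \<longrightarrow> q' (up_edge x) x = qstar (up_edge x) x" if "x \<in> cells S" "x \<noteq> r" for x
    using that
  proof (induct x rule: parent_induct)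
    case (step x)
    then show ?case
      using star_cond_up_edge_top star_cond_up_edge_step parent_in_Vs by blast
  qed
  show "q' e x = qstar e x"
  proof (cases "e \<in> Es S \<and> x \<in> e")
    case True
    then show ?thesis
      using up[of x] Vs_in_cells[of x] star_cond_off_up_edge qstar_off_up_edge by metis
  next
    case False
    then show ?thesis using star_cond qstar_outside by (simp add: star_cond_def)
  qed
qed

end

lemma star_eq: "star S r = S\<lparr>qd := qstar\<rparr>"
  unfolding star_def using the_equality[of "star_cond S r" qstar, OF star_cond_qstar star_cond_unique]
  by simp

end

section \<open>Path weights in \<open>S\<^sup>(\<eta>)\<close>\<close>

context rooted_dtree
begin

lemma tpath_snoc_child:
  assumes y: "y \<in> cells S" and z: "z \<in> cells S" "z \<noteq> r" and notin: "z \<notin> set (tpath y (parent z))"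
  shows "tpath y z = tpath y (parent z) @ [z]"
  using tpath_snoc[OF y parent_in_cells[OF z]] up_edge_in_edges[OF z] notin by (simp add: up_edge_def)

lemma tpath_snoc_parent:
  assumes y: "y \<in> cells S" and z: "z \<in> cells S" "z \<noteq> r" and z_in: "z \<in> set (tpath y (parent z))"
  shows "tpath y (parent z) = tpath y z @ [parent z]"
proof -
  let ?z' = "parent z"
  have z': "?z' \<in> cells S" using parent_in_cells[OF z] .
  obtain xs ys where p': "tpath y ?z' = xs @ z # ys" using split_list[OF z_in] by blast
  have p: "tpath y z = xs @ [z]" using tpath_prefix[OF y z' p'] .
  have "?z' \<notin> set (tpath y z)"
  proof
    assume "?z' \<in> set (tpath y z)"
    then have "?z' \<in> set xs" using p parent_neq[OF z] by simp
    moreover have "ys \<noteq> []" using last_tpath[OF y z'] p' parent_neq[OF z] by (cases ys) auto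
    then have "?z' = last ys" using last_tpath[OF y z'] p' by simp
    with \<open>ys \<noteq> []\<close> have "?z' \<in> set ys" by simp
    ultimately show False using distinct_tpath[OF y z'] p' by auto
  qed
  then show ?thesis
    using tpath_snoc[OF y z(1), of ?z'] up_edge_in_edges[OF z] by (simp add: up_edge_def insert_commute)
qed

end

context central_arrow
begin

lemma root_notin_tpath: "y \<in> cells S \<Longrightarrow> y \<noteq> r \<Longrightarrow> z \<in> cells S \<Longrightarrow> z \<noteq> r \<Longrightarrow> r \<notin> set (tpath y z)"
proof
  assume y: "y \<in> cells S" "y \<noteq> r" and z: "z \<in> cells S" "z \<noteq> r" and "r \<in> set (tpath y z)"
  then obtain xs ys where p: "tpath y z = xs @ r # ys" using split_list by metis
  have xs: "xs \<noteq> []" using hd_tpath[OF y(1) z(1)] p y(2) by (cases xs) auto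
  obtain y1 ys1 where ys: "ys = y1 # ys1" using last_tpath[OF y(1) z(1)] p z(2) by (cases ys) auto
  have pe: "path_edges (tpath y z) = path_edges xs @ {last xs, r} # {r, y1} # path_edges ys"
    using p xs ys by (simp add: path_edges_append)
  have "distinct (path_edges (tpath y z))" "set (path_edges (tpath y z)) \<subseteq> Es S"
    using is_path_tpath[OF y(1) z(1)] by (auto simp: is_path_iff)
  moreover from this have "{last xs, r} = {r, y1}" using pe root_edge_unique by auto
  ultimately show False using pe by simp
qed

text \<open>The top cell of a path avoiding \<open>r\<close> is its cell closest to \<open>r\<close>; the up edges of the other
  cells are exactly the edges of the path.\<close>

lemma card_top_cells:
  assumes p: "is_path (cells S) (Es S) p" and r: "r \<notin> set p"
  shows "card {m\<in>set p. up_edge m \<notin> set (path_edges p)} = 1"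
proof -
  let ?E = "set (path_edges p)"
  let ?A = "{m\<in>set p. up_edge m \<in> ?E}"
  have cells: "set p \<subseteq> cells S" using p by (auto simp: is_path_iff)
  have "?E \<subseteq> up_edge ` ?A"
  proof
    fix e assume e: "e \<in> ?E"
    then obtain c where c: "c \<in> cells S" "c \<noteq> r" "up_edge c = e"
      using ex_up_edge_eq p by (auto simp: is_path_iff)
    then have "c \<in> set p" using path_edges_subset[OF e] in_up_edge[of c] by auto
    then show "e \<in> up_edge ` ?A" using c e by auto
  qed
  then have img: "up_edge ` ?A = ?E" by auto
  have "inj_on up_edge ?A"
  proof (rule inj_onI)
    fix x y assume "x \<in> ?A" "y \<in> ?A" "up_edge x = up_edge y"
    then show "x = y" using up_edge_inj cells r by blast
  qed
  then have "card ?A = card ?E" using card_image img by fastforce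
  also have "\<dots> = length p - 1"
    using distinct_card[of "path_edges p"] length_path_edges p by (simp add: is_path_iff)
  finally have card_A: "card ?A = length p - 1" .
  have "card (set p) = length p" using distinct_card[OF distinct_path[OF p]] .
  moreover have "{m\<in>set p. up_edge m \<notin> ?E} = set p - ?A" by auto
  moreover have "card (set p - ?A) = card (set p) - card ?A" by (rule card_Diff_subset) auto
  moreover have "p \<noteq> []" using p by (simp add: is_path_iff)
  ultimately show ?thesis using card_A by (cases p) auto
qed

definition top_cell :: "'a list \<Rightarrow> 'a" where
  "top_cell p = (THE m. m \<in> set p \<and> up_edge m \<notin> set (path_edges p))"

lemma top_cell:
  assumes "is_path (cells S) (Es S) p" "r \<notin> set p"
  shows "top_cell p \<in> set p" "up_edge (top_cell p) \<notin> set (path_edges p)"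
  using theI'[of "\<lambda>m. m \<in> set p \<and> up_edge m \<notin> set (path_edges p)"] card_top_cells[OF assms]
  by (auto simp: top_cell_def card_1_singleton_iff)

lemma top_cell_eqI:
  assumes "is_path (cells S) (Es S) p" "r \<notin> set p" "m \<in> set p" "up_edge m \<notin> set (path_edges p)"
  shows "top_cell p = m"
  using top_cell[OF assms(1,2)] card_top_cells[OF assms(1,2)] assms(3,4)
  by (metis (mono_tags, lifting) card_1_singletonE mem_Collect_eq singletonD)

text \<open>The path weight with the label of the top cell's up edge removed; the same for
  \<open>q\<close> and \<open>q\<^sup>*\<close>, since the remaining up edges are path edges.\<close>

definition reduced_weight :: "'a list \<Rightarrow> int" where
  "reduced_weight p = (\<Prod>u\<in>set p. Qprod S (qd S) (insert (up_edge u) (set (path_edges p))) u)"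

lemma prod_cells_eq_top:
  assumes p: "is_path (cells S) (Es S) p" and r: "r \<notin> set p"
  shows "(\<Prod>u\<in>set p. Qprod S q (set (path_edges p)) u)
    = q (up_edge (top_cell p)) (top_cell p) * (\<Prod>u\<in>set p. Qprod S q (insert (up_edge u) (set (path_edges p))) u)"
proof -
  let ?E = "set (path_edges p)" and ?m = "top_cell p"
  have m: "?m \<in> set p" "up_edge ?m \<notin> ?E" using top_cell[OF p r] by auto
  have mc: "?m \<in> cells S" "?m \<noteq> r" using m p r by (auto simp: is_path_iff)
  have others: "Qprod S q ?E u = Qprod S q (insert (up_edge u) ?E) u" if "u \<in> set p - {?m}" for u
  proof -
    have "up_edge u \<in> ?E" using that top_cell_eqI[OF p r, of u] by auto
    then show ?thesis by (simp add: insert_absorb)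
  qed
  have "(\<Prod>u\<in>set p. Qprod S q ?E u) = Qprod S q ?E ?m * (\<Prod>u\<in>set p - {?m}. Qprod S q ?E u)"
    using prod.remove[of "set p" ?m] m by simp
  also have "Qprod S q ?E ?m = q (up_edge ?m) ?m * Qprod S q (insert (up_edge ?m) ?E) ?m"
    by (rule Qprod_insert[OF finite_edges up_edge_in_edges[OF mc] in_up_edge m(2)])
  also have "(\<Prod>u\<in>set p - {?m}. Qprod S q ?E u) = (\<Prod>u\<in>set p - {?m}. Qprod S q (insert (up_edge u) ?E) u)"
    using others by (rule prod.cong[OF refl])
  finally show ?thesis
    using prod.remove[of "set p" ?m "\<lambda>u. Qprod S q (insert (up_edge u) ?E) u"] m by simp
qed

lemma path_weight_eq_top:
  "is_path (cells S) (Es S) p \<Longrightarrow> r \<notin> set p \<Longrightarrow>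
    path_weight S p = qd S (up_edge (top_cell p)) (top_cell p) * reduced_weight p"
  unfolding path_weight_eq_prod_cells reduced_weight_def by (rule prod_cells_eq_top)

lemma path_weight_qstar_eq_top:
  assumes p: "is_path (cells S) (Es S) p" and r: "r \<notin> set p"
  shows "path_weight (S\<lparr>qd := qstar\<rparr>) p = qstar (up_edge (top_cell p)) (top_cell p) * reduced_weight p"
proof -
  have "Qprod S qstar (insert (up_edge u) (set (path_edges p))) u
      = Qprod S (qd S) (insert (up_edge u) (set (path_edges p))) u" for u
    by (rule Qprod_qstar_off_up_edge) simp
  then show ?thesis
    unfolding path_weight_upd_eq_prod_cells[OF p] prod_cells_eq_top[OF p r] reduced_weight_def by simp
qed

lemma root_weight_qstar: "y \<in> cells S \<Longrightarrow> path_weight (S\<lparr>qd := qstar\<rparr>) (rpath y) = root_weight y"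
proof -
  assume y: "y \<in> cells S"
  have "Qprod S qstar (set (path_edges (rpath y))) u = Qprod S (qd S) (set (path_edges (rpath y))) u"
    if "u \<in> set (rpath y)" for u
    using that up_edge_in_path_edges_rpath[OF y] root_notin_Vs by (intro Qprod_qstar_off_up_edge) auto
  then show ?thesis
    unfolding root_weight_def path_weight_upd_eq_prod_cells[OF is_path_rpath[OF y]]
      path_weight_eq_prod_cells[OF is_path_rpath[OF y]]
    by (intro prod.cong) auto
qed

end

context central_arrow
begin

lemma reduced_weight_snoc_child:
  assumes p: "p \<noteq> []" and z: "z \<in> cells S" "z \<noteq> r" "parent z \<noteq> r"
    and last: "last p = parent z" and notin: "z \<notin> set p"
  shows "qd S (up_edge z) (parent z) * reduced_weight (p @ [z]) = Qup z * reduced_weight p"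
proof -
  let ?z' = "parent z" and ?E = "set (path_edges p)"
  let ?X = "\<lambda>F u. Qprod S (qd S) (insert (up_edge u) F) u"
  have E: "set (path_edges (p @ [z])) = insert (up_edge z) ?E"
    using p last by (simp add: path_edges_snoc up_edge_def)
  have z'_in: "?z' \<in> set p" using p last last_in_set by metis
  have z_off: "\<forall>e\<in>?E. z \<notin> e" using notin path_edges_subset by blast
  have at_z: "?X (set (path_edges (p @ [z]))) z = Qup z"
    unfolding Qup_def E by (rule Qprod_cong) (use z_off in auto)
  have away: "?X (set (path_edges (p @ [z]))) u = ?X ?E u" if "u \<in> set p" "u \<noteq> ?z'" for u
  proof -
    have "u \<notin> up_edge z" using that notin by (auto simp: up_edge_def)
    then show ?thesis unfolding E by (intro Qprod_cong) auto
  qed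
  have "up_edge z \<notin> insert (up_edge ?z') ?E"
    using up_edge_parent_neq[OF z] z_off in_up_edge[of z] by auto
  then have at_z': "?X ?E ?z' = qd S (up_edge z) ?z' * ?X (set (path_edges (p @ [z]))) ?z'"
    unfolding E
    using Qprod_insert[OF finite_edges up_edge_in_edges[OF z(1,2)] parent_in_up_edge]
    by (simp add: insert_commute)
  have "reduced_weight (p @ [z]) = Qup z * (\<Prod>u\<in>set p. ?X (set (path_edges (p @ [z]))) u)"
    unfolding reduced_weight_def using notin at_z by simp
  also have "(\<Prod>u\<in>set p. ?X (set (path_edges (p @ [z]))) u)
      = ?X (set (path_edges (p @ [z]))) ?z' * (\<Prod>u\<in>set p - {?z'}. ?X (set (path_edges (p @ [z]))) u)"
    using prod.remove[of "set p" ?z'] z'_in by simp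
  also have "(\<Prod>u\<in>set p - {?z'}. ?X (set (path_edges (p @ [z]))) u) = (\<Prod>u\<in>set p - {?z'}. ?X ?E u)"
    by (rule prod.cong) (use away in auto)
  finally have "reduced_weight (p @ [z])
      = Qup z * (?X (set (path_edges (p @ [z]))) ?z' * (\<Prod>u\<in>set p - {?z'}. ?X ?E u))" .
  moreover have "reduced_weight p = ?X ?E ?z' * (\<Prod>u\<in>set p - {?z'}. ?X ?E u)"
    unfolding reduced_weight_def using prod.remove[of "set p" ?z'] z'_in by simp
  ultimately show ?thesis using at_z' by (simp add: algebra_simps)
qed

lemma reduced_weight_snoc_parent:
  assumes p: "p \<noteq> []" and z: "last p \<in> cells S" "last p \<noteq> r" "parent (last p) \<noteq> r"
    and notin: "parent (last p) \<notin> set p"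
  shows "reduced_weight (p @ [parent (last p)])
    = Qprod S (qd S) {up_edge (parent (last p)), up_edge (last p)} (parent (last p)) * reduced_weight p"
proof -
  let ?z = "last p" and ?E = "set (path_edges p)"
  let ?z' = "parent ?z" and ?E' = "set (path_edges (p @ [parent (last p)]))"
  have E': "?E' = insert (up_edge ?z) ?E"
    using p by (simp add: path_edges_snoc up_edge_def insert_commute)
  have z'_off: "\<forall>e\<in>?E. ?z' \<notin> e" using notin path_edges_subset by blast
  have at_z': "Qprod S (qd S) (insert (up_edge ?z') ?E') ?z'
      = Qprod S (qd S) {up_edge ?z', up_edge ?z} ?z'"
    unfolding E' by (rule Qprod_cong) (use z'_off in auto)
  have others: "Qprod S (qd S) (insert (up_edge u) ?E') u = Qprod S (qd S) (insert (up_edge u) ?E) u"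
    if "u \<in> set p" for u
  proof (cases "u = ?z")
    case False
    then have "u \<notin> up_edge ?z" using that notin by (auto simp: up_edge_def)
    then show ?thesis unfolding E' by (intro Qprod_cong) auto
  qed (simp add: E')
  show ?thesis
    unfolding reduced_weight_def using notin at_z' others by simp
qed

lemma top_cell_tpath_top:
  assumes y: "y \<in> cells S" "y \<noteq> r" and z: "z \<in> cells S" "z \<noteq> r" "parent z = r"
  shows "top_cell (tpath y z) = z"
proof (rule top_cell_eqI)
  have r: "r \<notin> set (tpath y z)" using root_notin_tpath[OF y z(1,2)] .
  moreover have "r \<in> up_edge z" using parent_in_up_edge[of z] z(3) by simp
  ultimately show "up_edge z \<notin> set (path_edges (tpath y z))" using path_edges_subset by blast
  show "z \<in> set (tpath y z)"
    using last_tpath[OF y(1) z(1)] tpath_not_Nil[OF y(1) z(1)] last_in_set by metis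
qed (use is_path_tpath[OF y(1) z(1)] root_notin_tpath[OF y z(1,2)] in auto)

lemma reduced_weight_tpath_top:
  assumes y: "y \<in> cells S" "y \<noteq> r" and z: "z \<in> cells S" "z \<noteq> r" "parent z = r"
  shows "reduced_weight (tpath y z) = root_weight y"
proof -
  let ?p = "tpath y z"
  let ?E = "insert (up_edge z) (set (path_edges ?p))"
  have path: "is_path (cells S) (Es S) ?p" using is_path_tpath[OF y(1) z(1)] .
  have r: "r \<notin> set ?p" using root_notin_tpath[OF y z(1,2)] .
  have up_z: "up_edge z = {z, r}" using z(3) by (simp add: up_edge_def insert_commute)
  have rpath_y: "tpath y r = ?p @ [r]"
    using tpath_snoc[OF y(1) z(1), of r] up_edge_in_edges[OF z(1,2)] up_z r by simp
  have path_r: "is_path (cells S) (Es S) (?p @ [r])" using is_path_tpath[OF y(1) root_in_cells] rpath_y by simp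
  have "root_weight y = path_weight S (?p @ [r])"
    unfolding root_weight_def using tpath_rev[OF y(1) root_in_cells] rpath_y path_weight_rev[OF path_r] by simp
  also have "\<dots> = Qprod S (qd S) ?E r * (\<Prod>u\<in>set ?p. Qprod S (qd S) ?E u)"
    unfolding path_weight_eq_prod_cells[OF path_r]
    using tpath_not_Nil[OF y(1) z(1)] last_tpath[OF y(1) z(1)] up_z r by (simp add: path_edges_snoc)
  also have "Qprod S (qd S) ?E r = 1"
    by (rule Qprod_eq_1) (use root_edges_eq[OF z] in auto)
  also have "(\<Prod>u\<in>set ?p. Qprod S (qd S) ?E u) = reduced_weight ?p"
    unfolding reduced_weight_def
  proof (rule prod.cong[OF refl])
    fix u assume u: "u \<in> set ?p"
    show "Qprod S (qd S) ?E u = Qprod S (qd S) (insert (up_edge u) (set (path_edges ?p))) u"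
    proof (cases "u = z")
      case False
      then have "up_edge u \<in> set (path_edges ?p)"
        using top_cell_eqI[OF path r u] top_cell_tpath_top[OF y z] by auto
      moreover have "u \<notin> up_edge z" using False u r up_z by auto
      ultimately show ?thesis by (intro Qprod_cong) (auto simp: insert_absorb)
    qed simp
  qed
  finally show ?thesis by simp
qed

text \<open>The two induction steps of \<open>up_sum_reduced_weight\<close> (induction on \<open>z\<close> towards \<open>r\<close>): the path
  from \<open>y\<close> to \<open>z\<close> either extends or shortens the path from \<open>y\<close> to \<open>parent z\<close>.\<close>

lemma up_sum_reduced_weight_step_child:
  assumes y: "y \<in> cells S" "y \<noteq> r" and z: "z \<in> cells S" "z \<noteq> r" "parent z \<noteq> r"
    and notin: "z \<notin> set (tpath y (parent z))"
    and IH: "up_sum (top_cell (tpath y (parent z))) * reduced_weight (tpath y (parent z))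
      = root_weight y * root_weight (parent z)"
  shows "up_sum (top_cell (tpath y z)) * reduced_weight (tpath y z) = root_weight y * root_weight z"
proof -
  let ?z' = "parent z" and ?p' = "tpath y (parent z)"
  have z': "?z' \<in> cells S" using parent_in_cells[OF z(1,2)] .
  have path': "is_path (cells S) (Es S) ?p'" and r': "r \<notin> set ?p'"
    using is_path_tpath[OF y(1) z'] root_notin_tpath[OF y z' z(3)] by auto
  have p: "tpath y z = ?p' @ [z]" using tpath_snoc_child[OF y(1) z(1,2) notin] .
  have top: "top_cell (tpath y z) = top_cell ?p'"
  proof (rule top_cell_eqI)
    have "top_cell ?p' \<noteq> z" using top_cell(1)[OF path' r'] notin by auto
    moreover have "top_cell ?p' \<in> cells S" "top_cell ?p' \<noteq> r"
      using top_cell(1)[OF path' r'] path' r' by (auto simp: is_path_iff)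
    ultimately have "up_edge (top_cell ?p') \<noteq> up_edge z" using up_edge_inj z(1,2) by blast
    then show "up_edge (top_cell ?p') \<notin> set (path_edges (tpath y z))"
      using top_cell(2)[OF path' r'] p tpath_not_Nil[OF y(1) z'] last_tpath[OF y(1) z']
      by (simp add: path_edges_snoc up_edge_def)
  qed (use is_path_tpath[OF y(1) z(1)] root_notin_tpath[OF y z(1,2)] top_cell(1)[OF path' r'] p in auto)
  have snoc: "qd S (up_edge z) ?z' * reduced_weight (tpath y z) = Qup z * reduced_weight ?p'"
    unfolding p by (rule reduced_weight_snoc_child[OF tpath_not_Nil[OF y(1) z'] z last_tpath[OF y(1) z'] notin])
  have "qd S (up_edge z) ?z' * (up_sum (top_cell (tpath y z)) * reduced_weight (tpath y z))
      = up_sum (top_cell ?p') * (qd S (up_edge z) ?z' * reduced_weight (tpath y z))"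
    using top by simp
  also have "\<dots> = Qup z * (root_weight y * root_weight ?z')"
    unfolding snoc using IH by (simp add: algebra_simps)
  also have "\<dots> = qd S (up_edge z) ?z' * (root_weight y * root_weight z)"
    using root_weight_step[OF z] by (simp add: algebra_simps)
  finally have "qd S (up_edge z) ?z' * (up_sum (top_cell (tpath y z)) * reduced_weight (tpath y z))
      = qd S (up_edge z) ?z' * (root_weight y * root_weight z)" .
  moreover have "qd S (up_edge z) ?z' \<ge> 1"
    using central_down_edges[OF parent_in_Vs[OF z]] up_edge_in_down_edges_parent[OF z] by blast
  ultimately show ?thesis by simp
qed

lemma up_sum_reduced_weight_step_parent:
  assumes y: "y \<in> cells S" "y \<noteq> r" and z: "z \<in> cells S" "z \<noteq> r" "parent z \<noteq> r"
    and z_in: "z \<in> set (tpath y (parent z))"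
    and IH: "up_sum (top_cell (tpath y (parent z))) * reduced_weight (tpath y (parent z))
      = root_weight y * root_weight (parent z)"
  shows "up_sum (top_cell (tpath y z)) * reduced_weight (tpath y z) = root_weight y * root_weight z"
proof -
  let ?z' = "parent z" and ?p = "tpath y z"
  have z': "?z' \<in> cells S" using parent_in_cells[OF z(1,2)] .
  have p': "tpath y ?z' = ?p @ [?z']" using tpath_snoc_parent[OF y(1) z(1,2) z_in] .
  have path: "is_path (cells S) (Es S) ?p" and r: "r \<notin> set ?p"
    using is_path_tpath[OF y(1) z(1)] root_notin_tpath[OF y z(1,2)] by auto
  have z'_notin: "?z' \<notin> set ?p" using distinct_tpath[OF y(1) z'] p' by simp
  have last: "last ?p = z" and ne: "?p \<noteq> []" using last_tpath[OF y(1) z(1)] tpath_not_Nil[OF y(1) z(1)] by auto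
  have top: "top_cell ?p = z"
  proof (rule top_cell_eqI[OF path r])
    show "z \<in> set ?p" using last ne last_in_set by metis
    show "up_edge z \<notin> set (path_edges ?p)"
      using z'_notin path_edges_subset parent_in_up_edge[of z] by blast
  qed
  have top': "top_cell (tpath y ?z') = ?z'"
  proof (rule top_cell_eqI)
    have "up_edge ?z' \<notin> set (path_edges ?p)"
      using z'_notin path_edges_subset in_up_edge[of ?z'] by blast
    then show "up_edge ?z' \<notin> set (path_edges (tpath y ?z'))"
      using p' ne last up_edge_parent_neq[OF z] by (simp add: path_edges_snoc up_edge_def insert_commute)
  qed (use is_path_tpath[OF y(1) z'] root_notin_tpath[OF y z' z(3)] p' in auto)
  have snoc: "reduced_weight (tpath y ?z') = Qprod S (qd S) {up_edge ?z', up_edge z} ?z' * reduced_weight ?p"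
    unfolding p' using reduced_weight_snoc_parent[OF ne] last z z'_notin by simp
  have "qd S (up_edge z) ?z' * (up_sum (top_cell ?p) * reduced_weight ?p)
      = up_sum ?z' * Qprod S (qd S) {up_edge ?z', up_edge z} ?z' * reduced_weight ?p * Qup z"
    using top up_sum_step[OF z] by (simp add: algebra_simps)
  also have "\<dots> = Qup z * (root_weight y * root_weight ?z')"
    using IH top' snoc by (simp add: algebra_simps)
  also have "\<dots> = qd S (up_edge z) ?z' * (root_weight y * root_weight z)"
    using root_weight_step[OF z] by (simp add: algebra_simps)
  finally have "qd S (up_edge z) ?z' * (up_sum (top_cell ?p) * reduced_weight ?p)
      = qd S (up_edge z) ?z' * (root_weight y * root_weight z)" .
  moreover have "qd S (up_edge z) ?z' \<ge> 1"
    using central_down_edges[OF parent_in_Vs[OF z]] up_edge_in_down_edges_parent[OF z] by blast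
  ultimately show ?thesis by simp
qed

lemma up_sum_reduced_weight:
  assumes y: "y \<in> cells S" "y \<noteq> r" and z: "z \<in> cells S" "z \<noteq> r"
  shows "up_sum (top_cell (tpath y z)) * reduced_weight (tpath y z) = root_weight y * root_weight z"
  using z
proof (induct z rule: parent_induct)
  case (step z)
  show ?case
  proof (cases "parent z = r")
    case True
    then show ?thesis
      using top_cell_tpath_top[OF y step(1,2)] reduced_weight_tpath_top[OF y step(1,2)]
        up_sum_top[OF step(1,2)] root_weight_eq[OF step(1,2)] anc_weight_top[OF step(1,2)]
      by simp
  next
    case False
    then show ?thesis
      using up_sum_reduced_weight_step_child[OF y step(1,2) False]
        up_sum_reduced_weight_step_parent[OF y step(1,2) False] step(3)
      by blast
  qed
qed

lemma top_cell_in_Vs: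
  assumes y: "y \<in> cells S" "y \<noteq> r" and \<alpha>: "\<alpha> \<in> cells S" "\<alpha> \<noteq> r" and ne: "y \<noteq> \<alpha>"
  shows "top_cell (tpath y \<alpha>) \<in> Vs S"
proof (rule ccontr)
  let ?p = "tpath y \<alpha>" and ?m = "top_cell (tpath y \<alpha>)"
  have path: "is_path (cells S) (Es S) ?p" and r: "r \<notin> set ?p"
    using is_path_tpath[OF y(1) \<alpha>(1)] root_notin_tpath[OF y \<alpha>] by auto
  have m: "?m \<in> set ?p" "up_edge ?m \<notin> set (path_edges ?p)" using top_cell[OF path r] by auto
  assume "?m \<notin> Vs S"
  then have arrow: "?m \<in> As S" "?m \<noteq> r" using m path r by (auto simp: is_path_iff cells_def)
  have "length ?p \<noteq> 1"
  proof
    assume "length ?p = 1"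
    then obtain x where "?p = [x]" by (cases ?p) auto
    then show False using hd_tpath[OF y(1) \<alpha>(1)] last_tpath[OF y(1) \<alpha>(1)] ne by simp
  qed
  moreover have "length ?p \<noteq> 0" using tpath_not_Nil[OF y(1) \<alpha>(1)] by simp
  ultimately have "2 \<le> length ?p" by linarith
  then obtain e where "e \<in> set (path_edges ?p)" "?m \<in> e" using ex_path_edge_containing[OF _ m(1)] by blast
  then have "e \<in> down_edges ?m" using m(2) path by (auto simp: down_edges_def is_path_iff)
  then show False using down_edges_arrow[OF arrow] by simp
qed

lemma path_weight_add_path_weight_star:
  assumes y: "y \<in> cells S" "y \<noteq> r" and \<alpha>: "\<alpha> \<in> cells S" "\<alpha> \<noteq> r" and ne: "y \<noteq> \<alpha>"
  shows "path_weight S (gam S y \<alpha>) + path_weight (star S r) (gam S y \<alpha>) = root_weight y * root_weight \<alpha>"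
proof -
  let ?p = "tpath y \<alpha>" and ?m = "top_cell (tpath y \<alpha>)"
  have path: "is_path (cells S) (Es S) ?p" and r: "r \<notin> set ?p"
    using is_path_tpath[OF y(1) \<alpha>(1)] root_notin_tpath[OF y \<alpha>] by auto
  show ?thesis
    unfolding gam_eq_tpath star_eq path_weight_eq_top[OF path r] path_weight_qstar_eq_top[OF path r]
    using qstar_up_edge[OF top_cell_in_Vs[OF y \<alpha> ne]] up_sum_reduced_weight[OF y \<alpha>]
    by (simp add: algebra_simps flip: distrib_left)
qed

end

section \<open>The invariants \<open>M\<close> and \<open>F\<close> of \<open>S\<^sup>(\<eta>)\<close>\<close>

lemma prod_mult_card_minus_1:
  fixes f :: "'a \<Rightarrow> int"
  assumes fin: "finite K" and ge: "\<forall>e\<in>K. f e \<ge> 1" and almost_1: "card {e\<in>K. f e \<noteq> 1} \<le> 1"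
  shows "(\<Prod>e\<in>K. f e) * (int (card K) - 1) = (\<Sum>e\<in>K. \<Prod>e'\<in>K - {e}. f e') - 1"
proof (cases "\<exists>e0\<in>K. f e0 \<noteq> 1")
  case False
  then have "(\<Sum>e\<in>K. \<Prod>e'\<in>K - {e}. f e') = (\<Sum>e\<in>K. 1)" by (intro sum.cong) auto
  with False show ?thesis by simp
next
  case True
  then obtain e0 where e0: "e0 \<in> K" "f e0 \<noteq> 1" by blast
  have one: "f e = 1" if "e \<in> K" "e \<noteq> e0" for e
  proof (rule ccontr)
    assume "f e \<noteq> 1"
    then have "card {e0, e} \<le> card {e\<in>K. f e \<noteq> 1}" using e0 that fin by (intro card_mono) auto
    then show False using almost_1 that(2) by simp
  qed
  have except_e0: "(\<Prod>e'\<in>K - {e0}. f e') = 1" using one by (intro prod.neutral) auto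
  have except_other: "(\<Prod>e'\<in>K - {e}. f e') = f e0" if "e \<in> K - {e0}" for e
  proof -
    have "(\<Prod>e'\<in>K - {e}. f e') = f e0 * (\<Prod>e'\<in>K - {e} - {e0}. f e')"
      using prod.remove[of "K - {e}" e0 f] fin e0 that by auto
    moreover have "(\<Prod>e'\<in>K - {e} - {e0}. f e') = 1" using one by (intro prod.neutral) auto
    ultimately show ?thesis by simp
  qed
  have "(\<Sum>e\<in>K. \<Prod>e'\<in>K - {e}. f e') = (\<Prod>e'\<in>K - {e0}. f e') + (\<Sum>e\<in>K - {e0}. \<Prod>e'\<in>K - {e}. f e')"
    using sum.remove[OF fin e0(1)] by blast
  also have "\<dots> = 1 + (\<Sum>e\<in>K - {e0}. f e0)" using except_e0 except_other by simp
  also have "\<dots> = 1 + (int (card K) - 1) * f e0" using fin e0(1) card_gt_0_iff[of K] by auto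
  finally show ?thesis using prod.remove[OF fin e0(1), of f] except_e0 by (simp add: algebra_simps)
qed

context central_arrow
begin

lemma root_weight_mult_valency:
  assumes y: "y \<in> cells S" "y \<noteq> r"
  shows "root_weight y * (int (valency S y) - 2)
    = (\<Sum>e\<in>down_edges y. anc_weight y * Qprod S (qd S) {up_edge y, e} y) - anc_weight y"
proof -
  have "(\<forall>e\<in>down_edges y. qd S e y \<ge> 1) \<and> card {e\<in>down_edges y. qd S e y \<noteq> 1} \<le> 1"
    using central_down_edges down_edges_arrow y by (cases "y \<in> Vs S") (auto simp: cells_def)
  then have "Qup y * (int (card (down_edges y)) - 1)
      = (\<Sum>e\<in>down_edges y. \<Prod>e'\<in>down_edges y - {e}. qd S e' y) - 1"
    unfolding Qup_eq_prod_down_edges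
    using prod_mult_card_minus_1[OF finite_down_edges, where f="\<lambda>e. qd S e y"] by blast
  moreover have "(\<Prod>e'\<in>down_edges y - {e}. qd S e' y) = Qprod S (qd S) {up_edge y, e} y" for e
    unfolding Qprod_def down_edges_def by (rule arg_cong[where f="\<lambda>A. prod _ A"]) auto
  ultimately have id: "Qup y * (int (card (down_edges y)) - 1)
      = (\<Sum>e\<in>down_edges y. Qprod S (qd S) {up_edge y, e} y) - 1"
    by simp
  have "root_weight y * (int (valency S y) - 2) = anc_weight y * (Qup y * (int (card (down_edges y)) - 1))"
    using root_weight_eq[OF y] valency_eq_card_down_edges[OF y] by simp
  also have "\<dots> = (\<Sum>e\<in>down_edges y. anc_weight y * Qprod S (qd S) {up_edge y, e} y) - anc_weight y"
    unfolding id by (simp add: sum_distrib_left algebra_simps)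
  finally show ?thesis .
qed

lemma bij_betw_parent_up_edge:
  "bij_betw (\<lambda>c. (parent c, up_edge c)) {c\<in>cells S - {r}. parent c \<noteq> r} (Sigma (cells S - {r}) down_edges)"
proof (rule bij_betwI')
  fix x y assume "x \<in> {c\<in>cells S - {r}. parent c \<noteq> r}" "y \<in> {c\<in>cells S - {r}. parent c \<noteq> r}"
  then show "((parent x, up_edge x) = (parent y, up_edge y)) = (x = y)" using up_edge_inj by auto
next
  fix x assume "x \<in> {c\<in>cells S - {r}. parent c \<noteq> r}"
  then show "(parent x, up_edge x) \<in> Sigma (cells S - {r}) down_edges"
    using parent_in_cells up_edge_in_down_edges_parent by auto
next
  fix ye assume "ye \<in> Sigma (cells S - {r}) down_edges"
  then obtain y e where ye: "ye = (y, e)" "y \<in> cells S - {r}" "e \<in> down_edges y" by auto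
  then have "e \<in> Es S" "y \<in> e" "y = r \<or> e \<noteq> up_edge y" by (auto simp: down_edges_def)
  then obtain c where "c \<in> cells S" "c \<noteq> r" "parent c = y" "up_edge c = e" by (rule obtain_child)
  then show "\<exists>x\<in>{c\<in>cells S - {r}. parent c \<noteq> r}. ye = (parent x, up_edge x)" using ye by auto
qed

lemma ex_unique_top_child: "\<exists>w. {c\<in>cells S - {r}. parent c = r} = {w} \<and> anc_weight w = 1"
proof -
  have "card {e\<in>Es S. r \<in> e} = 1" using decorated_tree_facts(4)[OF root_arrow] by (simp add: valency_def)
  then obtain e where e: "e \<in> Es S" "r \<in> e"
    by (metis (mono_tags, lifting) card_1_singletonE mem_Collect_eq singletonI)
  obtain w where w: "w \<in> cells S" "w \<noteq> r" "parent w = r" using obtain_child[OF e] by metis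
  have "c \<in> {w}" if "c \<in> {c\<in>cells S - {r}. parent c = r}" for c
  proof -
    from that have c: "c \<in> cells S" "c \<noteq> r" "parent c = r" by auto
    then have "up_edge c = up_edge w"
      using root_edge_unique[OF up_edge_in_edges[OF c(1,2)] _ up_edge_in_edges[OF w(1,2)]]
        parent_in_up_edge[of c] parent_in_up_edge[of w] w by simp
    then show ?thesis using up_edge_inj[OF c(1,2) w(1,2)] by simp
  qed
  then have "{c\<in>cells S - {r}. parent c = r} = {w}" using w by blast
  then show ?thesis using anc_weight_top[OF w] by blast
qed

text \<open>Summing \<open>root_weight_mult_valency\<close> telescopes: by \<open>anc_weight_step\<close> the term for the edge
  \<open>e = up_edge c\<close> at \<open>y = parent c\<close> is \<open>anc_weight c\<close>, and the top child has \<open>anc_weight = 1\<close>.\<close>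

lemma sum_root_weight_mult_valency: "(\<Sum>y\<in>cells S - {r}. root_weight y * (int (valency S y) - 2)) = -1"
proof -
  let ?A = "cells S - {r}" and ?D = "{c\<in>cells S - {r}. parent c \<noteq> r}"
  let ?W = "\<lambda>y e. anc_weight y * Qprod S (qd S) {up_edge y, e} y"
  have finA: "finite ?A" using finite_cells by simp
  have children: "(\<Sum>y\<in>?A. \<Sum>e\<in>down_edges y. ?W y e) = (\<Sum>c\<in>?D. anc_weight c)"
  proof -
    have "(\<Sum>y\<in>?A. \<Sum>e\<in>down_edges y. ?W y e) = (\<Sum>(y, e)\<in>Sigma ?A down_edges. ?W y e)"
      by (rule sum.Sigma[OF finA]) (simp add: finite_down_edges)
    also have "\<dots> = (\<Sum>c\<in>?D. ?W (parent c) (up_edge c))"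
      using sum.reindex_bij_betw[OF bij_betw_parent_up_edge, of "\<lambda>(y, e). ?W y e"] by simp
    also have "\<dots> = (\<Sum>c\<in>?D. anc_weight c)"
      by (rule sum.cong) (auto simp: anc_weight_step)
    finally show ?thesis .
  qed
  obtain w where w: "{c\<in>?A. parent c = r} = {w}" "anc_weight w = 1" using ex_unique_top_child by blast
  have "(\<Sum>y\<in>?D \<union> {c\<in>?A. parent c = r}. anc_weight y)
      = (\<Sum>c\<in>?D. anc_weight c) + (\<Sum>c\<in>{c\<in>?A. parent c = r}. anc_weight c)"
    by (rule sum.union_disjoint) (use finA in auto)
  moreover have "?D \<union> {c\<in>?A. parent c = r} = ?A" by auto
  ultimately have all: "(\<Sum>y\<in>?A. anc_weight y) = (\<Sum>c\<in>?D. anc_weight c) + 1"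
    using w by simp
  have "(\<Sum>y\<in>?A. root_weight y * (int (valency S y) - 2)) = (\<Sum>y\<in>?A. (\<Sum>e\<in>down_edges y. ?W y e) - anc_weight y)"
    using root_weight_mult_valency by (intro sum.cong) auto
  also have "\<dots> = -1" using children all by (simp add: sum_subtractf)
  finally show ?thesis .
qed

end

text \<open>This is the situation of the arrow \<open>\<alpha>\<^sub>i\<close> in \<open>T'\<^sub>i\<close>.\<close>

locale central_arrow_01 = central_arrow +
  assumes fd_01: "\<forall>\<alpha>\<in>As S. fd S \<alpha> \<in> {0, 1}" and fd_root: "fd S r = 0"
begin

definition root_deg :: int where
  "root_deg = (\<Sum>\<alpha>\<in>As S - A0 S. root_weight \<alpha>)"

lemma root_in_A0: "r \<in> A0 S"
  using root_arrow fd_root by (simp add: A0_def)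

lemma Nf_star: "Nf (star S r) v = (\<Sum>\<alpha>\<in>As S - A0 S. path_weight (star S r) (gam S v \<alpha>))"
  using Nf_eq_sum_path_weight_if_01[of "star S r"] fd_01 by (simp add: star_eq)

lemma Nf_star_root: "Nf (star S r) r = root_deg"
  unfolding Nf_star root_deg_def
proof (rule sum.cong[OF refl])
  fix \<alpha> assume "\<alpha> \<in> As S - A0 S"
  then have "\<alpha> \<in> cells S" by (simp add: cells_def)
  then show "path_weight (star S r) (gam S r \<alpha>) = root_weight \<alpha>"
    using root_weight_qstar star_eq by (simp add: gam_eq_tpath)
qed

lemma Nf_star_other:
  assumes v: "v \<in> (Vs S \<union> A0 S) - {r}"
  shows "Nf (star S r) v = root_weight v * root_deg - Nf S v"
proof -
  have "Nf (star S r) v = (\<Sum>\<alpha>\<in>As S - A0 S. root_weight v * root_weight \<alpha> - path_weight S (gam S v \<alpha>))"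
    unfolding Nf_star
  proof (rule sum.cong[OF refl])
    fix \<alpha> assume \<alpha>: "\<alpha> \<in> As S - A0 S"
    then have "v \<noteq> \<alpha>" "\<alpha> \<noteq> r" using v decorated_tree_facts(3) root_in_A0 by (auto simp: A0_def)
    then show "path_weight (star S r) (gam S v \<alpha>) = root_weight v * root_weight \<alpha> - path_weight S (gam S v \<alpha>)"
      using path_weight_add_path_weight_star[of v \<alpha>] v \<alpha> by (auto simp: cells_def A0_def algebra_simps)
  qed
  also have "\<dots> = root_weight v * root_deg - Nf S v"
    using Nf_eq_sum_path_weight_if_01[OF fd_01]
    by (simp add: root_deg_def sum_subtractf sum_distrib_left)
  finally show ?thesis .
qed

lemma sum_root_weight_mult_valency_01:
  "(\<Sum>v\<in>(Vs S \<union> A0 S) - {r}. root_weight v * (int (valency S v) - 2)) = root_deg - 1"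
proof -
  let ?Y = "(Vs S \<union> A0 S) - {r}" and ?L = "As S - A0 S"
  have "finite ?Y" "finite ?L" using decorated_tree_facts(1,2) by (auto simp: A0_def)
  moreover have "?Y \<inter> ?L = {}" using decorated_tree_facts(3) by (auto simp: A0_def)
  moreover have "?Y \<union> ?L = cells S - {r}" using root_in_A0 by (auto simp: cells_def A0_def)
  moreover have "(\<Sum>v\<in>?L. root_weight v * (int (valency S v) - 2)) = - root_deg"
    unfolding root_deg_def by (simp add: decorated_tree_facts(4) sum_negf[symmetric])
  ultimately show ?thesis
    using sum_root_weight_mult_valency sum.union_disjoint[of ?Y ?L "\<lambda>v. root_weight v * (int (valency S v) - 2)"]
    by simp
qed

lemma Mf_star:
  "Mf (star S r) = 2 * root_deg - root_deg\<^sup>2 + (\<Sum>v\<in>(Vs S \<union> A0 S) - {r}. Nf S v * (int (valency S v) - 2))"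
proof -
  let ?Y = "(Vs S \<union> A0 S) - {r}" and ?\<delta> = "\<lambda>v. int (valency S v) - 2"
  have "(\<Sum>v\<in>Vs S \<union> A0 S. Nf (star S r) v * ?\<delta> v)
      = Nf (star S r) r * ?\<delta> r + (\<Sum>v\<in>?Y. Nf (star S r) v * ?\<delta> v)"
    using sum.remove[of "Vs S \<union> A0 S" r] root_in_A0 decorated_tree_facts(1,2) by (simp add: A0_def)
  also have "(\<Sum>v\<in>?Y. Nf (star S r) v * ?\<delta> v)
      = (\<Sum>v\<in>?Y. root_deg * (root_weight v * ?\<delta> v) - Nf S v * ?\<delta> v)"
    by (rule sum.cong[OF refl]) (simp add: Nf_star_other algebra_simps)
  also have "\<dots> = root_deg * (\<Sum>v\<in>?Y. root_weight v * ?\<delta> v) - (\<Sum>v\<in>?Y. Nf S v * ?\<delta> v)"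
    by (simp add: sum_subtractf sum_distrib_left)
  finally have "(\<Sum>v\<in>Vs S \<union> A0 S. Nf (star S r) v * ?\<delta> v)
      = - root_deg + root_deg * (root_deg - 1) - (\<Sum>v\<in>?Y. Nf S v * ?\<delta> v)"
    using Nf_star_root sum_root_weight_mult_valency_01 decorated_tree_facts(4)[OF root_arrow] by simp
  then show ?thesis
    unfolding Mf_def by (simp add: star_eq power2_eq_square algebra_simps)
qed

lemma Ff_star: "Ff (star S r) = int (card (As S - A0 S))"
  using Ff_eq_card_if_01[of "star S r"] fd_01 by (simp add: star_eq)

end

section \<open>The branches at the root\<close>

locale root_decomposition = rooted_dtree T v0 for T :: "('a, 'b) dtree_scheme" and v0 +
  assumes is_root: "is_root T v0" and fd_01: "\<forall>\<alpha>\<in>As T. fd T \<alpha> \<in> {0, 1}"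
begin

definition edges_off_root :: "'a set set" where
  "edges_off_root = {e\<in>Es T. v0 \<notin> e}"

definition adj :: "('a \<times> 'a) set" where
  "adj = {(a, b). {a, b} \<in> edges_off_root}"

definition branch :: "'a \<Rightarrow> 'a set" where
  "branch w = comp_cells edges_off_root w"

lemma branch_eq: "branch w = {x. (w, x) \<in> adj\<^sup>*}"
  by (simp add: branch_def comp_cells_def adj_def)

lemma edges_off_root_subset: "edges_off_root \<subseteq> Es T"
  by (auto simp: edges_off_root_def)

lemma root_in_Vs: "v0 \<in> Vs T"
  using is_root by (simp add: is_root_def)

lemma qd_at_root: "e \<in> Es T \<Longrightarrow> v0 \<in> e \<Longrightarrow> qd T e v0 = 1"
  using is_root by (simp add: is_root_def)

lemma Qprod_at_root: "Qprod T (qd T) F v0 = 1"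
  unfolding Qprod_def by (rule prod.neutral) (simp add: qd_at_root)

lemma adj_rtrancl_sym: "(a, b) \<in> adj\<^sup>* \<Longrightarrow> (b, a) \<in> adj\<^sup>*"
proof -
  assume "(a, b) \<in> adj\<^sup>*"
  then have "(b, a) \<in> (adj\<inverse>)\<^sup>*" by (rule rtrancl_converseI)
  moreover have "adj\<inverse> = adj" by (auto simp: adj_def insert_commute)
  ultimately show ?thesis by simp
qed

lemma nbrsD: "w \<in> nbrs T v0 \<Longrightarrow> {v0, w} \<in> Es T \<and> w \<in> cells T \<and> w \<noteq> v0"
  using edge_ends_in_cells[of v0 w] edge_ends_distinct[of v0 w] by (auto simp: nbrs_def)

lemma in_branch_self: "w \<in> branch w"
  by (simp add: branch_eq)

lemma root_notin_branch: "w \<in> nbrs T v0 \<Longrightarrow> v0 \<notin> branch w"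
proof
  assume w: "w \<in> nbrs T v0" and "v0 \<in> branch w"
  then have "(w, v0) \<in> adj\<^sup>*" by (simp add: branch_eq)
  then show False
  proof (rule rtranclE)
    assume "w = v0"
    then show False using nbrsD[OF w] by simp
  next
    fix y assume "(y, v0) \<in> adj"
    then show False by (simp add: adj_def edges_off_root_def)
  qed
qed

lemma branch_facts:
  assumes w: "w \<in> nbrs T v0" and x: "x \<in> branch w"
  shows "x \<in> cells T \<and> x \<noteq> v0 \<and> set (tpath w x) \<subseteq> branch w \<and> rpath x = v0 # tpath w x"
proof -
  have w': "{v0, w} \<in> Es T" "w \<in> cells T" using nbrsD[OF w] by auto
  have "(w, x) \<in> {(a, b). {a, b} \<in> edges_off_root}\<^sup>*" using x by (simp add: branch_eq adj_def)
  then have x_cells: "x \<in> cells T" and sub: "set (tpath w x) \<subseteq> branch w"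
    using tpath_within_component[OF edges_off_root_subset _ w'(2)] by (auto simp: branch_eq adj_def)
  have "v0 \<notin> set (tpath w x)" using sub root_notin_branch[OF w] by auto
  moreover have "last (rev (tpath w x)) = w"
    using hd_tpath[OF w'(2) x_cells] tpath_not_Nil[OF w'(2) x_cells] by (simp add: last_rev)
  ultimately have "is_path (cells T) (Es T) (rev (tpath w x) @ [v0])"
    using is_path_snoc[of "cells T" "Es T" "rev (tpath w x)" v0] is_path_tpath[OF w'(2) x_cells]
      w'(1) root_in_cells by (simp add: insert_commute)
  then have "is_path (cells T) (Es T) (v0 # tpath w x)"
    using is_path_rev[of "cells T" "Es T" "v0 # tpath w x"] by simp
  then have "rpath x = v0 # tpath w x"
    by (rule tpath_eqI) (use last_tpath[OF w'(2) x_cells] tpath_not_Nil[OF w'(2) x_cells] in auto)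
  then show ?thesis using x_cells sub x root_notin_branch[OF w] by auto
qed

lemma ex_branch: "x \<in> cells T \<Longrightarrow> x \<noteq> v0 \<Longrightarrow> \<exists>w\<in>nbrs T v0. x \<in> branch w"
proof -
  assume x: "x \<in> cells T" "x \<noteq> v0"
  obtain t where t: "rpath x = v0 # t" using hd_rpath[OF x(1)] rpath_not_Nil[OF x(1)] by (cases "rpath x") auto
  have t_ne: "t \<noteq> []" using t last_rpath[OF x(1)] x(2) by auto
  have path: "is_path (cells T) (Es T) t"
    using is_path_appendD2[of "cells T" "Es T" "[v0]" t] is_path_rpath[OF x(1)] t t_ne by simp
  have "{v0, hd t} \<in> set (path_edges (rpath x))" using t t_ne by (cases t) auto
  then have nbr: "hd t \<in> nbrs T v0" using path_edges_tpath_subset[OF root_in_cells x(1)] by (auto simp: nbrs_def)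
  have "v0 \<notin> set t" using distinct_rpath[OF x(1)] t by simp
  then have "set (path_edges t) \<subseteq> edges_off_root"
    using path path_edges_subset by (fastforce simp: edges_off_root_def is_path_iff)
  then have "(hd t, last t) \<in> adj\<^sup>*" using path_ends_connected[OF path] by (simp add: adj_def)
  moreover have "last t = x" using t t_ne last_rpath[OF x(1)] by simp
  ultimately show ?thesis using nbr by (auto simp: branch_eq)
qed

lemma branch_disjoint: "w \<in> nbrs T v0 \<Longrightarrow> w' \<in> nbrs T v0 \<Longrightarrow> x \<in> branch w \<Longrightarrow> x \<in> branch w' \<Longrightarrow> w = w'"
proof -
  assume a: "w \<in> nbrs T v0" "w' \<in> nbrs T v0" "x \<in> branch w" "x \<in> branch w'"
  then have "tpath w x = tpath w' x" using branch_facts[OF a(1,3)] branch_facts[OF a(2,4)] by simp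
  then show ?thesis
    using hd_tpath[of w x] hd_tpath[of w' x] branch_facts[OF a(1,3)] nbrsD[OF a(1)] nbrsD[OF a(2)] by metis
qed

lemma tpath_within_branch: "w \<in> nbrs T v0 \<Longrightarrow> x \<in> branch w \<Longrightarrow> y \<in> branch w \<Longrightarrow> set (tpath x y) \<subseteq> branch w"
proof -
  assume w: "w \<in> nbrs T v0" and x: "x \<in> branch w" and y: "y \<in> branch w"
  have wx: "(w, x) \<in> adj\<^sup>*" and wy: "(w, y) \<in> adj\<^sup>*" using x y by (auto simp: branch_eq)
  then have "(x, y) \<in> {(a, b). {a, b} \<in> edges_off_root}\<^sup>*"
    using adj_rtrancl_sym[OF wx] by (simp add: adj_def)
  then have "set (tpath x y) \<subseteq> {z. (x, z) \<in> adj\<^sup>*}"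
    using tpath_within_component[OF edges_off_root_subset] branch_facts[OF w x] by (simp add: adj_def)
  then show ?thesis using wx by (auto simp: branch_eq intro: rtrancl_trans)
qed

lemma edge_at_branch: "w \<in> nbrs T v0 \<Longrightarrow> x \<in> branch w \<Longrightarrow> e \<in> Es T \<Longrightarrow> x \<in> e \<Longrightarrow> e \<subseteq> insert v0 (branch w)"
proof -
  assume w: "w \<in> nbrs T v0" and x: "x \<in> branch w" and e: "e \<in> Es T" "x \<in> e"
  obtain y where y: "e = {x, y}" "x \<noteq> y" using edge_eq_doubleton[OF e] by blast
  show ?thesis
  proof (cases "y = v0")
    case False
    then have "(x, y) \<in> adj" using e y branch_facts[OF w x] by (auto simp: adj_def edges_off_root_def)
    then have "y \<in> branch w" using x by (auto simp: branch_eq intro: rtrancl_into_rtrancl)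
    then show ?thesis using y x by auto
  qed (use y x in auto)
qed

lemma tpath_within_branch_root:
  assumes w: "w \<in> nbrs T v0" and x: "x \<in> insert v0 (branch w)" and y: "y \<in> insert v0 (branch w)"
  shows "set (tpath x y) \<subseteq> insert v0 (branch w)"
proof (cases "x = v0")
  case True
  then show ?thesis using y rpath_root branch_facts[OF w] by (cases "y = v0") auto
next
  case False
  then have x': "x \<in> branch w" using x by simp
  show ?thesis
  proof (cases "y = v0")
    case True
    then have "tpath x y = rev (rpath x)" using tpath_rev[OF root_in_cells] branch_facts[OF w x'] by simp
    then show ?thesis using branch_facts[OF w x'] by auto
  qed (use tpath_within_branch[OF w x'] y in auto)
qed

lemma edges_within_branch_root:
  assumes w: "w \<in> nbrs T v0"
  shows "{e\<in>Es T. e \<subseteq> insert v0 (branch w)} = insert {v0, w} {e\<in>edges_off_root. e \<subseteq> branch w}"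
proof (intro equalityI subsetI)
  fix e assume e: "e \<in> {e\<in>Es T. e \<subseteq> insert v0 (branch w)}"
  show "e \<in> insert {v0, w} {e\<in>edges_off_root. e \<subseteq> branch w}"
  proof (cases "v0 \<in> e")
    case True
    then obtain y where y: "e = {v0, y}" "v0 \<noteq> y" using edge_eq_doubleton[of e v0] e by blast
    then have "y \<in> branch w" "y \<in> nbrs T v0" using e by (auto simp: nbrs_def)
    then have "y = w" using branch_disjoint[OF _ w in_branch_self] by blast
    then show ?thesis using y by simp
  qed (use e in \<open>auto simp: edges_off_root_def\<close>)
qed (use nbrsD[OF w] in_branch_self in \<open>auto simp: edges_off_root_def\<close>)

lemma finite_nbrs: "finite (nbrs T v0)" and card_nbrs: "card (nbrs T v0) = valency T v0"
proof -
  have bij: "bij_betw (\<lambda>w. {v0, w}) (nbrs T v0) {e\<in>Es T. v0 \<in> e}"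
  proof (rule bij_betwI')
    fix x y assume "x \<in> nbrs T v0" "y \<in> nbrs T v0"
    then show "({v0, x} = {v0, y}) = (x = y)" using nbrsD by (auto simp: doubleton_eq_iff)
  next
    fix e assume "e \<in> {e\<in>Es T. v0 \<in> e}"
    then obtain y where "e = {v0, y}" "e \<in> Es T" using edge_eq_doubleton by blast
    then show "\<exists>x\<in>nbrs T v0. e = {v0, x}" by (auto simp: nbrs_def)
  qed (simp add: nbrs_def)
  then show "finite (nbrs T v0)" using bij_betw_finite finite_edges by fastforce
  show "card (nbrs T v0) = valency T v0" using bij_betw_same_card[OF bij] by (simp add: valency_def)
qed

lemma sum_over_branches:
  assumes A: "A \<subseteq> cells T - {v0}"
  shows "(\<Sum>x\<in>A. f x) = (\<Sum>w\<in>nbrs T v0. \<Sum>x\<in>A \<inter> branch w. f x)"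
proof -
  have "A = (\<Union>w\<in>nbrs T v0. A \<inter> branch w)" using ex_branch A by blast
  moreover have "(\<Sum>x\<in>(\<Union>w\<in>nbrs T v0. A \<inter> branch w). f x) = (\<Sum>w\<in>nbrs T v0. \<Sum>x\<in>A \<inter> branch w. f x)"
    using finite_nbrs finite_subset[OF A] finite_cells branch_disjoint
    by (intro sum.UNION_disjoint) auto
  ultimately show ?thesis by simp
qed

end

context root_decomposition
begin

context
  fixes w w' u \<alpha>
  assumes w: "w \<in> nbrs T v0" and w': "w' \<in> nbrs T v0" and ne: "w \<noteq> w'"
    and u: "u \<in> branch w" and \<alpha>: "\<alpha> \<in> branch w'"
begin

lemma rpath_across_branches:
  "set (rpath u) \<subseteq> insert v0 (branch w)" "set (rpath \<alpha>) \<subseteq> insert v0 (branch w')"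
  "branch w \<inter> branch w' = {}"
  using branch_facts[OF w u] branch_facts[OF w' \<alpha>] branch_disjoint[OF w w'] ne by auto

lemma path_edges_rpath_across_branches:
  "set (path_edges (rpath u)) \<inter> set (path_edges (rpath \<alpha>)) = {}"
proof (rule ccontr)
  assume "set (path_edges (rpath u)) \<inter> set (path_edges (rpath \<alpha>)) \<noteq> {}"
  then obtain e where e: "e \<in> set (path_edges (rpath u))" "e \<in> set (path_edges (rpath \<alpha>))" by blast
  then have "e \<subseteq> {v0}" using path_edges_subset rpath_across_branches by blast
  moreover have "card e = 2"
    using card_edge e(1) path_edges_tpath_subset[OF root_in_cells] branch_facts[OF w u] by blast
  ultimately show False using card_mono[of "{v0}" e] by simp
qed

lemma tpath_across_branches: "tpath u \<alpha> = rev (rpath u) @ tl (rpath \<alpha>)"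
proof (rule tpath_eqI)
  have u': "u \<in> cells T" and \<alpha>': "\<alpha> \<in> cells T" using branch_facts w u w' \<alpha> by auto
  have edges: "path_edges (rev (rpath u) @ tl (rpath \<alpha>)) = path_edges (rev (rpath u)) @ path_edges (rpath \<alpha>)"
    using rpath_not_Nil[OF u'] rpath_not_Nil[OF \<alpha>'] hd_rpath[OF \<alpha>'] hd_rpath[OF u']
    by (intro path_edges_append_tl) (auto simp: last_rev)
  have "set (rev (rpath u) @ tl (rpath \<alpha>)) \<subseteq> cells T"
    using set_rpath_subset[OF u'] set_rpath_subset[OF \<alpha>'] branch_facts[OF w' \<alpha>] by auto
  moreover have "set (path_edges (rev (rpath u) @ tl (rpath \<alpha>))) \<subseteq> Es T"
    unfolding edges using path_edges_tpath_subset[OF root_in_cells u'] path_edges_tpath_subset[OF root_in_cells \<alpha>']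
    by (auto simp: path_edges_rev)
  moreover have "distinct (path_edges (rev (rpath u) @ tl (rpath \<alpha>)))"
    unfolding edges using path_edges_rpath_across_branches is_path_rpath[OF u'] is_path_rpath[OF \<alpha>']
    by (auto simp: is_path_iff path_edges_rev)
  ultimately show "is_path (cells T) (Es T) (rev (rpath u) @ tl (rpath \<alpha>))"
    using rpath_not_Nil[OF u'] by (simp add: is_path_iff)
  show "hd (rev (rpath u) @ tl (rpath \<alpha>)) = u"
    using rpath_not_Nil[OF u'] last_rpath[OF u'] by (simp add: hd_rev)
  show "last (rev (rpath u) @ tl (rpath \<alpha>)) = \<alpha>"
    using branch_facts[OF w' \<alpha>] tpath_not_Nil[of w' \<alpha>] last_tpath[of w' \<alpha>] nbrsD[OF w'] by simp
qed

text \<open>The path passes through \<open>v0\<close>, where all labels are \<open>1\<close>.\<close>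

lemma path_weight_across_branches: "path_weight T (gam T u \<alpha>) = root_weight u * root_weight \<alpha>"
proof -
  have u': "u \<in> cells T" and \<alpha>': "\<alpha> \<in> cells T" using branch_facts w u w' \<alpha> by auto
  let ?q = "rev (rpath u) @ tl (rpath \<alpha>)"
  let ?Eu = "set (path_edges (rpath u))" and ?Ea = "set (path_edges (rpath \<alpha>))"
  let ?W = "\<lambda>F x. Qprod T (qd T) F x"
  have path: "is_path (cells T) (Es T) ?q" using tpath_across_branches is_path_tpath u' \<alpha>' by metis
  have cells: "set ?q = set (rpath u) \<union> set (rpath \<alpha>)"
    using branch_facts[OF w u] branch_facts[OF w' \<alpha>] by auto
  have edges: "set (path_edges ?q) = ?Eu \<union> ?Ea"
    using rpath_not_Nil[OF u'] rpath_not_Nil[OF \<alpha>'] hd_rpath[OF \<alpha>'] hd_rpath[OF u']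
    by (subst path_edges_append_tl) (auto simp: last_rev path_edges_rev)
  have on_u: "?W (?Eu \<union> ?Ea) x = ?W ?Eu x" if "x \<in> set (rpath u) - {v0}" for x
  proof -
    have "\<forall>e\<in>?Ea. x \<notin> e" using that path_edges_subset rpath_across_branches by blast
    then show ?thesis by (intro Qprod_cong) auto
  qed
  have on_\<alpha>: "?W (?Eu \<union> ?Ea) x = ?W ?Ea x" if "x \<in> set (rpath \<alpha>) - {v0}" for x
  proof -
    have "\<forall>e\<in>?Eu. x \<notin> e" using that path_edges_subset rpath_across_branches by blast
    then show ?thesis by (intro Qprod_cong) auto
  qed
  have split: "set (rpath u) \<union> set (rpath \<alpha>) = insert v0 ((set (rpath u) - {v0}) \<union> (set (rpath \<alpha>) - {v0}))"
    using root_in_rpath[OF u'] by auto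
  have disjoint: "(set (rpath u) - {v0}) \<inter> (set (rpath \<alpha>) - {v0}) = {}"
    using rpath_across_branches by blast
  have root_weight_v0: "root_weight x = (\<Prod>y\<in>set (rpath x) - {v0}. ?W (set (path_edges (rpath x))) y)"
    if "x \<in> cells T" for x
    unfolding root_weight_def path_weight_eq_prod_cells[OF is_path_rpath[OF that]]
    using prod.remove[of "set (rpath x)" v0 "?W (set (path_edges (rpath x)))"] root_in_rpath[OF that]
      Qprod_at_root by simp
  have "path_weight T ?q = (\<Prod>x\<in>set (rpath u) \<union> set (rpath \<alpha>). ?W (?Eu \<union> ?Ea) x)"
    using path_weight_eq_prod_cells[OF path] cells edges by simp
  also have "\<dots> = (\<Prod>x\<in>set (rpath u) - {v0}. ?W (?Eu \<union> ?Ea) x) * (\<Prod>x\<in>set (rpath \<alpha>) - {v0}. ?W (?Eu \<union> ?Ea) x)"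
    unfolding split using disjoint Qprod_at_root by (simp add: prod.union_disjoint)
  also have "\<dots> = root_weight u * root_weight \<alpha>"
    using on_u on_\<alpha> root_weight_v0[OF u'] root_weight_v0[OF \<alpha>'] by simp
  finally show ?thesis using tpath_across_branches by (simp add: gam_eq_tpath)
qed

end

end

section \<open>The trees \<open>T'\<^sub>i\<close> and \<open>T\<^sub>i\<close>\<close>

text \<open>\<open>T'\<^sub>i = Tprime T v0 w\<close> is a copy of the branch at \<open>w\<close> together with \<open>v0\<close>, where \<open>v0\<close> becomes
  the new arrow \<open>None\<close>.\<close>

locale root_branch = root_decomposition +
  fixes w assumes w_nbr: "w \<in> nbrs T v0"
begin

definition relabel :: "'a \<Rightarrow> 'a option" where
  "relabel x = (if x = v0 then None else Some x)"

abbreviation closed_branch :: "'a set" where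
  "closed_branch \<equiv> insert v0 (branch w)"

abbreviation T' :: "'a option dtree" where
  "T' \<equiv> Tprime T v0 w"

lemma Vs_Tprime: "Vs T' = Some ` (Vs T \<inter> branch w)"
  and As_Tprime: "As T' = insert None (Some ` (As T \<inter> branch w))"
  and Es_Tprime_eq: "Es T' = insert {None, Some w} ((\<lambda>e. Some ` e) ` {e\<in>edges_off_root. e \<subseteq> branch w})"
  and fd_Tprime: "fd T' x = (case x of None \<Rightarrow> 0 | Some y \<Rightarrow> fd T y)"
  and qd_Tprime_eq: "qd T' e x = (if e = {None, Some w} then (if x = None then 1 else qd T {v0, w} w)
    else (case x of None \<Rightarrow> 0 | Some y \<Rightarrow> qd T (Some -` e) y))"
  by (simp_all add: Tprime_def Let_def branch_def edges_off_root_def)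

lemma branch_subset_cells: "branch w \<subseteq> cells T"
  using branch_facts[OF w_nbr] by blast

lemma relabel_branch: "x \<in> branch w \<Longrightarrow> relabel x = Some x"
  using root_notin_branch[OF w_nbr] by (auto simp: relabel_def)

lemma relabel_root: "relabel v0 = None"
  by (simp add: relabel_def)

lemma inj_on_relabel: "inj_on relabel closed_branch"
  by (rule inj_onI) (auto simp: relabel_def split: if_splits)

lemma image_relabel_branch: "A \<subseteq> branch w \<Longrightarrow> relabel ` A = Some ` A"
  by (rule image_cong[OF refl]) (use relabel_branch in auto)

lemma cells_Tprime: "cells T' = relabel ` closed_branch"
proof -
  have "cells T' = insert None (Some ` ((Vs T \<union> As T) \<inter> branch w))"
    unfolding cells_def Vs_Tprime As_Tprime by auto
  also have "(Vs T \<union> As T) \<inter> branch w = branch w" using branch_subset_cells by (auto simp: cells_def)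
  finally show ?thesis using image_relabel_branch[of "branch w"] relabel_root by simp
qed

lemma Es_Tprime: "Es T' = image relabel ` {e\<in>Es T. e \<subseteq> closed_branch}"
proof -
  have "image relabel ` {e\<in>Es T. e \<subseteq> closed_branch}
      = insert (relabel ` {v0, w}) (image relabel ` {e\<in>edges_off_root. e \<subseteq> branch w})"
    unfolding edges_within_branch_root[OF w_nbr] by simp
  also have "relabel ` {v0, w} = {None, Some w}" using relabel_root relabel_branch[OF in_branch_self] by simp
  also have "image relabel ` {e\<in>edges_off_root. e \<subseteq> branch w} = (\<lambda>e. Some ` e) ` {e\<in>edges_off_root. e \<subseteq> branch w}"
    by (rule image_cong[OF refl]) (use image_relabel_branch in auto)
  finally show ?thesis unfolding Es_Tprime_eq by simp
qed

lemma is_tree_Tprime: "is_tree (cells T') (Es T')"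
  and gam_Tprime: "x \<in> closed_branch \<Longrightarrow> y \<in> closed_branch \<Longrightarrow> gam T' (relabel x) (relabel y) = map relabel (gam T x y)"
proof -
  have sub: "closed_branch \<subseteq> cells T" using branch_subset_cells root_in_cells by blast
  note within = tpath_within_branch_root[OF w_nbr]
  show "is_tree (cells T') (Es T')"
    unfolding cells_Tprime Es_Tprime by (rule is_tree_image_subtree[OF sub within inj_on_relabel])
  fix x y assume "x \<in> closed_branch" "y \<in> closed_branch"
  then show "gam T' (relabel x) (relabel y) = map relabel (gam T x y)"
    unfolding gam_def cells_Tprime Es_Tprime
    using the_path_image_subtree[OF sub within inj_on_relabel] by (simp add: gam_eq_tpath[unfolded gam_def])
qed

lemma qd_Tprime:
  assumes e: "e \<in> Es T" "e \<subseteq> closed_branch" and u: "u \<in> e"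
  shows "qd T' (relabel ` e) (relabel u) = qd T e u"
proof (cases "e = {v0, w}")
  case True
  then have img: "relabel ` e = {None, Some w}" using relabel_root relabel_branch[OF in_branch_self] by simp
  show ?thesis
  proof (cases "u = v0")
    case True
    then show ?thesis using img relabel_root qd_at_root nbrsD[OF w_nbr] \<open>e = {v0, w}\<close> qd_Tprime_eq by simp
  next
    case False
    then have "u = w" using u \<open>e = {v0, w}\<close> by simp
    then show ?thesis using img relabel_branch[OF in_branch_self] \<open>e = {v0, w}\<close> qd_Tprime_eq by simp
  qed
next
  case False
  then have e_branch: "e \<subseteq> branch w" using e edges_within_branch_root[OF w_nbr] by auto
  have "Some ` e \<noteq> {None, Some w}" by auto
  then show ?thesis
    using image_relabel_branch[OF e_branch] e_branch u qd_Tprime_eq relabel_branch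
    by (auto simp: inj_vimage_image_eq)
qed

lemma edges_at_Tprime:
  assumes u: "u \<in> branch w" and F: "F \<subseteq> Pow closed_branch"
  shows "{\<epsilon>\<in>Es T'. relabel u \<in> \<epsilon> \<and> \<epsilon> \<notin> image relabel ` F} = image relabel ` {e\<in>Es T. u \<in> e \<and> e \<notin> F}"
proof (intro equalityI subsetI)
  have u': "u \<in> closed_branch" using u by simp
  fix \<epsilon> assume \<epsilon>: "\<epsilon> \<in> {\<epsilon>\<in>Es T'. relabel u \<in> \<epsilon> \<and> \<epsilon> \<notin> image relabel ` F}"
  then obtain e where e: "\<epsilon> = relabel ` e" "e \<in> Es T" "e \<subseteq> closed_branch" using Es_Tprime by auto
  then have "u \<in> e" using \<epsilon> inj_on_image_mem_iff[OF inj_on_relabel u'] by auto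
  moreover have "e \<notin> F" using \<epsilon> e by auto
  ultimately show "\<epsilon> \<in> image relabel ` {e\<in>Es T. u \<in> e \<and> e \<notin> F}" using e by auto
next
  fix \<epsilon> assume "\<epsilon> \<in> image relabel ` {e\<in>Es T. u \<in> e \<and> e \<notin> F}"
  then obtain e where e: "\<epsilon> = relabel ` e" "e \<in> Es T" "u \<in> e" "e \<notin> F" by auto
  have e_sub: "e \<subseteq> closed_branch" using edge_at_branch[OF w_nbr u e(2,3)] .
  have "relabel ` e \<notin> image relabel ` F"
    using e(4) inj_on_image_mem_iff[OF inj_on_image_Pow[OF inj_on_relabel] _ F] e_sub by auto
  then show "\<epsilon> \<in> {\<epsilon>\<in>Es T'. relabel u \<in> \<epsilon> \<and> \<epsilon> \<notin> image relabel ` F}"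
    using e e_sub Es_Tprime by auto
qed

lemma edges_at_None: "\<epsilon> \<in> Es T' \<Longrightarrow> None \<in> \<epsilon> \<Longrightarrow> \<epsilon> = {None, Some w}"
  unfolding Es_Tprime_eq by auto

lemma Qprod_Tprime:
  assumes u: "u \<in> closed_branch" and F: "F \<subseteq> Pow closed_branch"
  shows "Qprod T' (qd T') (image relabel ` F) (relabel u) = Qprod T (qd T) F u"
proof (cases "u = v0")
  case True
  have "Qprod T' (qd T') (image relabel ` F) None = 1"
    unfolding Qprod_def by (rule prod.neutral) (use edges_at_None qd_Tprime_eq in auto)
  then show ?thesis using True relabel_root Qprod_at_root by simp
next
  case False
  then have u': "u \<in> branch w" using u by simp
  let ?A = "{e\<in>Es T. u \<in> e \<and> e \<notin> F}"
  have sub: "?A \<subseteq> Pow closed_branch" using edge_at_branch[OF w_nbr u'] by blast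
  have "Qprod T' (qd T') (image relabel ` F) (relabel u) = (\<Prod>\<epsilon>\<in>image relabel ` ?A. qd T' \<epsilon> (relabel u))"
    unfolding Qprod_def edges_at_Tprime[OF u' F] ..
  also have "\<dots> = (\<Prod>e\<in>?A. qd T' (relabel ` e) (relabel u))"
    using prod.reindex[OF inj_on_subset[OF inj_on_image_Pow[OF inj_on_relabel] sub]] by (simp add: comp_def)
  also have "\<dots> = (\<Prod>e\<in>?A. qd T e u)"
    by (rule prod.cong[OF refl]) (use qd_Tprime edge_at_branch[OF w_nbr u'] in auto)
  finally show ?thesis unfolding Qprod_def .
qed

lemma valency_Tprime: "u \<in> branch w \<Longrightarrow> valency T' (relabel u) = valency T u"
proof -
  assume u: "u \<in> branch w"
  have sub: "{e\<in>Es T. u \<in> e \<and> e \<notin> {}} \<subseteq> Pow closed_branch" using edge_at_branch[OF w_nbr u] by blast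
  have "{\<epsilon>\<in>Es T'. relabel u \<in> \<epsilon>} = image relabel ` {e\<in>Es T. u \<in> e \<and> e \<notin> {}}"
    using edges_at_Tprime[OF u, of "{}"] by simp
  then show ?thesis
    unfolding valency_def using card_image[OF inj_on_subset[OF inj_on_image_Pow[OF inj_on_relabel] sub]] by simp
qed

end

context root_branch
begin

lemma edge_Tprime_cases:
  assumes "\<epsilon> \<in> Es T'"
  obtains e where "\<epsilon> = relabel ` e" "e \<in> Es T" "e \<subseteq> closed_branch"
  using assms Es_Tprime by auto

lemma relabel_mem_edge_iff: "u \<in> closed_branch \<Longrightarrow> e \<subseteq> closed_branch \<Longrightarrow> relabel u \<in> relabel ` e \<longleftrightarrow> u \<in> e"
  using inj_on_image_mem_iff[OF inj_on_relabel] by blast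

lemma valency_Tprime_arrow: "\<alpha> \<in> As T' \<Longrightarrow> valency T' \<alpha> = 1"
proof (cases "\<alpha> = None")
  case True
  have "{e\<in>Es T'. None \<in> e} = {{None, Some w}}" using edges_at_None Es_Tprime_eq by auto
  then show ?thesis using True by (simp add: valency_def)
next
  case False
  assume "\<alpha> \<in> As T'"
  with False obtain a where "\<alpha> = Some a" "a \<in> As T" "a \<in> branch w" using As_Tprime by auto
  then show ?thesis using valency_Tprime relabel_branch decorated_tree_facts(4) by metis
qed

lemma qd_Tprime_arrow:
  assumes \<epsilon>: "\<epsilon> \<in> Es T'" and \<alpha>: "\<alpha> \<in> As T'" "\<alpha> \<in> \<epsilon>"
  shows "qd T' \<epsilon> \<alpha> = 1"
proof (cases "\<alpha> = None")
  case True
  then show ?thesis using edges_at_None \<epsilon> \<alpha> qd_Tprime_eq by simp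
next
  case False
  with \<alpha> obtain a where a: "\<alpha> = relabel a" "a \<in> As T" "a \<in> branch w"
    using As_Tprime relabel_branch by auto
  obtain e where e: "\<epsilon> = relabel ` e" "e \<in> Es T" "e \<subseteq> closed_branch" using edge_Tprime_cases[OF \<epsilon>] .
  then have "a \<in> e" using \<alpha>(2) a relabel_mem_edge_iff by simp
  then show ?thesis using qd_Tprime[OF e(2,3)] decorated_tree_facts(5)[OF e(2) a(2)] a e by simp
qed

lemma gcd_qd_Tprime:
  assumes v: "v \<in> Vs T'" and \<epsilon>: "\<epsilon> \<in> Es T'" "\<epsilon>' \<in> Es T'" "v \<in> \<epsilon>" "v \<in> \<epsilon>'" "\<epsilon> \<noteq> \<epsilon>'"
  shows "gcd (qd T' \<epsilon> v) (qd T' \<epsilon>' v) = 1"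
proof -
  obtain a where a: "v = relabel a" "a \<in> Vs T" "a \<in> branch w" using v Vs_Tprime relabel_branch by auto
  obtain e where e: "\<epsilon> = relabel ` e" "e \<in> Es T" "e \<subseteq> closed_branch" using edge_Tprime_cases[OF \<epsilon>(1)] .
  obtain e' where e': "\<epsilon>' = relabel ` e'" "e' \<in> Es T" "e' \<subseteq> closed_branch" using edge_Tprime_cases[OF \<epsilon>(2)] .
  have "a \<in> e" "a \<in> e'" using \<epsilon>(3,4) a e e' relabel_mem_edge_iff by auto
  moreover have "e \<noteq> e'" using \<epsilon>(5) e e' by auto
  ultimately show ?thesis
    using decorated_tree_facts(6)[OF a(2) e(2) e'(2)] qd_Tprime[OF e(2,3)] qd_Tprime[OF e'(2,3)] a e e' by simp
qed

lemma decorated_tree_Tprime: "decorated_tree T'"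
  unfolding decorated_tree_def
  using decorated_tree_facts(1-3) Vs_Tprime As_Tprime is_tree_Tprime valency_Tprime_arrow qd_Tprime_arrow
    gcd_qd_Tprime
  by auto

lemma path_weight_Tprime:
  assumes x: "x \<in> closed_branch" and y: "y \<in> closed_branch"
  shows "path_weight T' (gam T' (relabel x) (relabel y)) = path_weight T (gam T x y)"
proof -
  interpret T': dtree T' by (rule dtree.intro[OF decorated_tree_Tprime])
  let ?p = "gam T x y"
  have xy: "x \<in> cells T" "y \<in> cells T" using x y branch_subset_cells root_in_cells by auto
  have path: "is_path (cells T) (Es T) ?p" using is_path_tpath[OF xy] gam_eq_tpath by simp
  have within: "set ?p \<subseteq> closed_branch" using tpath_within_branch_root[OF w_nbr x y] gam_eq_tpath by simp
  have "relabel x \<in> cells T'" "relabel y \<in> cells T'" using x y cells_Tprime by auto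
  then have path': "is_path (cells T') (Es T') (map relabel ?p)"
    using T'.is_path_tpath T'.gam_eq_tpath gam_Tprime[OF x y] by metis
  have edges: "set (path_edges ?p) \<subseteq> Pow closed_branch" using path_edges_subset within by blast
  have "path_weight T' (map relabel ?p)
      = (\<Prod>u\<in>relabel ` set ?p. Qprod T' (qd T') (image relabel ` set (path_edges ?p)) u)"
    unfolding T'.path_weight_eq_prod_cells[OF path'] by (simp add: path_edges_map)
  also have "\<dots> = (\<Prod>u\<in>set ?p. Qprod T' (qd T') (image relabel ` set (path_edges ?p)) (relabel u))"
    using prod.reindex[OF inj_on_subset[OF inj_on_relabel within]] by (simp add: comp_def)
  also have "\<dots> = (\<Prod>u\<in>set ?p. Qprod T (qd T) (set (path_edges ?p)) u)"
    using Qprod_Tprime[OF _ edges] within by (intro prod.cong) auto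
  also have "\<dots> = path_weight T ?p" by (rule path_weight_eq_prod_cells[OF path, symmetric])
  finally show ?thesis using gam_Tprime[OF x y] by simp
qed

lemma Tprime_central_condition:
  assumes y: "y \<in> Vs T" "y \<in> branch w"
  defines "F' \<equiv> set (path_edges (gam T' None (relabel y)))"
  shows "(\<forall>\<epsilon>\<in>Es T'. relabel y \<in> \<epsilon> \<and> \<epsilon> \<notin> F' \<longrightarrow> qd T' \<epsilon> (relabel y) \<ge> 1) \<and>
    card {\<epsilon>\<in>Es T'. relabel y \<in> \<epsilon> \<and> \<epsilon> \<notin> F' \<and> qd T' \<epsilon> (relabel y) \<noteq> 1} \<le> 1"
proof -
  let ?F = "set (path_edges (gam T v0 y))"
  have y_ne: "y \<noteq> v0" using branch_facts[OF w_nbr y(2)] by auto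
  have F': "F' = image relabel ` ?F"
    using gam_Tprime[of v0 y] y(2) relabel_root by (simp add: F'_def path_edges_map)
  have "?F \<subseteq> Pow closed_branch"
    using path_edges_subset tpath_within_branch_root[OF w_nbr, of v0 y] y(2) gam_eq_tpath by fastforce
  then have edges: "{\<epsilon>\<in>Es T'. relabel y \<in> \<epsilon> \<and> \<epsilon> \<notin> F'} = image relabel ` {e\<in>Es T. y \<in> e \<and> e \<notin> ?F}"
    using edges_at_Tprime[OF y(2)] F' by simp
  have root_cond: "(\<forall>e\<in>Es T. y \<in> e \<and> e \<notin> ?F \<longrightarrow> qd T e y \<ge> 1) \<and>
      card {e\<in>Es T. y \<in> e \<and> e \<notin> ?F \<and> qd T e y \<noteq> 1} \<le> 1"
    using is_root y(1) y_ne by (simp add: is_root_def)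
  have qd_eq: "qd T' (relabel ` e) (relabel y) = qd T e y" if "e \<in> Es T" "y \<in> e" for e
    using qd_Tprime[OF that(1) edge_at_branch[OF w_nbr y(2) that]] that(2) .
  have "{\<epsilon>\<in>Es T'. relabel y \<in> \<epsilon> \<and> \<epsilon> \<notin> F' \<and> qd T' \<epsilon> (relabel y) \<noteq> 1}
      \<subseteq> image relabel ` {e\<in>Es T. y \<in> e \<and> e \<notin> ?F \<and> qd T e y \<noteq> 1}"
  proof
    fix \<epsilon> assume \<epsilon>: "\<epsilon> \<in> {\<epsilon>\<in>Es T'. relabel y \<in> \<epsilon> \<and> \<epsilon> \<notin> F' \<and> qd T' \<epsilon> (relabel y) \<noteq> 1}"
    then have "\<epsilon> \<in> {\<epsilon>\<in>Es T'. relabel y \<in> \<epsilon> \<and> \<epsilon> \<notin> F'}" by simp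
    then obtain e where "\<epsilon> = relabel ` e" "e \<in> Es T" "y \<in> e" "e \<notin> ?F" unfolding edges by blast
    then show "\<epsilon> \<in> image relabel ` {e\<in>Es T. y \<in> e \<and> e \<notin> ?F \<and> qd T e y \<noteq> 1}"
      using \<epsilon> qd_eq by auto
  qed
  then have "card {\<epsilon>\<in>Es T'. relabel y \<in> \<epsilon> \<and> \<epsilon> \<notin> F' \<and> qd T' \<epsilon> (relabel y) \<noteq> 1}
      \<le> card (image relabel ` {e\<in>Es T. y \<in> e \<and> e \<notin> ?F \<and> qd T e y \<noteq> 1})"
    using finite_edges by (intro card_mono) auto
  also have "\<dots> \<le> card {e\<in>Es T. y \<in> e \<and> e \<notin> ?F \<and> qd T e y \<noteq> 1}"
    using finite_edges by (intro card_image_le) simp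
  finally have card: "card {\<epsilon>\<in>Es T'. relabel y \<in> \<epsilon> \<and> \<epsilon> \<notin> F' \<and> qd T' \<epsilon> (relabel y) \<noteq> 1} \<le> 1"
    using root_cond by linarith
  have "qd T' \<epsilon> (relabel y) \<ge> 1" if "\<epsilon> \<in> Es T'" "relabel y \<in> \<epsilon>" "\<epsilon> \<notin> F'" for \<epsilon>
  proof -
    have "\<epsilon> \<in> {\<epsilon>\<in>Es T'. relabel y \<in> \<epsilon> \<and> \<epsilon> \<notin> F'}" using that by simp
    then obtain e where "\<epsilon> = relabel ` e" "e \<in> Es T" "y \<in> e" "e \<notin> ?F" unfolding edges by blast
    then show ?thesis using qd_eq root_cond by auto
  qed
  then show ?thesis using card by blast
qed

lemma central_arrow_01_Tprime: "central_arrow_01 T' None"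
proof -
  interpret T': dtree T' by (rule dtree.intro[OF decorated_tree_Tprime])
  have "None \<in> cells T'" "None \<in> As T'" using As_Tprime by (auto simp: cells_def)
  moreover have "\<forall>y'\<in>Vs T'. (\<forall>\<epsilon>\<in>Es T'. y' \<in> \<epsilon> \<and> \<epsilon> \<notin> set (path_edges (gam T' None y')) \<longrightarrow> qd T' \<epsilon> y' \<ge> 1) \<and>
      card {\<epsilon>\<in>Es T'. y' \<in> \<epsilon> \<and> \<epsilon> \<notin> set (path_edges (gam T' None y')) \<and> qd T' \<epsilon> y' \<noteq> 1} \<le> 1"
    using Tprime_central_condition Vs_Tprime relabel_branch by auto
  moreover have "\<forall>\<alpha>\<in>As T'. fd T' \<alpha> \<in> {0, 1}" using fd_01 As_Tprime fd_Tprime by auto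
  ultimately show ?thesis
    using fd_Tprime by unfold_locales auto
qed

lemma A0_Tprime: "A0 T' = insert None (Some ` (A0 T \<inter> branch w))"
  unfolding A0_def As_Tprime using fd_Tprime by auto

lemma arrows_Tprime: "As T' - A0 T' = relabel ` ((As T - A0 T) \<inter> branch w)"
  using image_relabel_branch[of "(As T - A0 T) \<inter> branch w"] unfolding A0_Tprime As_Tprime
  by (auto simp: A0_def)

lemma vertices_Tprime: "(Vs T' \<union> A0 T') - {None} = relabel ` ((Vs T \<union> A0 T) \<inter> branch w)"
  using image_relabel_branch[of "(Vs T \<union> A0 T) \<inter> branch w"] unfolding A0_Tprime Vs_Tprime
  by auto

end

context root_decomposition
begin

definition branch_deg :: "'a \<Rightarrow> int" where
  "branch_deg w = (\<Sum>\<alpha>\<in>(As T - A0 T) \<inter> branch w. root_weight \<alpha>)"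

definition branch_M :: "'a \<Rightarrow> int" where
  "branch_M w = (\<Sum>v\<in>(Vs T \<union> A0 T) \<inter> branch w. Nf T v * (int (valency T v) - 2))"

lemma arrows_subset: "As T - A0 T \<subseteq> cells T - {v0}"
  using root_in_Vs decorated_tree_facts(3) by (auto simp: cells_def)

lemma deg_eq_sum_root_weight: "deg T v0 = (\<Sum>\<alpha>\<in>As T - A0 T. root_weight \<alpha>)"
  unfolding deg_def Nf_eq_sum_path_weight_if_01[OF fd_01] root_weight_def by (simp add: gam_eq_tpath)

lemma deg_eq_sum_branch_deg: "deg T v0 = (\<Sum>w\<in>nbrs T v0. branch_deg w)"
  unfolding deg_eq_sum_root_weight branch_deg_def by (rule sum_over_branches[OF arrows_subset])

lemma Mf_eq_sum_branch_M:
  "Mf T = - (deg T v0 * (int (card (nbrs T v0)) - 2) + (\<Sum>w\<in>nbrs T v0. branch_M w))"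
proof -
  let ?Y = "Vs T \<union> A0 T" and ?\<delta> = "\<lambda>v. Nf T v * (int (valency T v) - 2)"
  have "finite ?Y" using decorated_tree_facts(1,2) by (auto simp: A0_def)
  then have "(\<Sum>v\<in>?Y. ?\<delta> v) = ?\<delta> v0 + (\<Sum>v\<in>?Y - {v0}. ?\<delta> v)"
    using root_in_Vs by (intro sum.remove) auto
  also have "(\<Sum>v\<in>?Y - {v0}. ?\<delta> v) = (\<Sum>w\<in>nbrs T v0. \<Sum>v\<in>(?Y - {v0}) \<inter> branch w. ?\<delta> v)"
    by (rule sum_over_branches) (use decorated_tree_facts(3) in \<open>auto simp: cells_def A0_def\<close>)
  also have "\<dots> = (\<Sum>w\<in>nbrs T v0. branch_M w)"
    unfolding branch_M_def by (rule sum.cong[OF refl]) (use root_notin_branch in \<open>auto intro!: sum.cong\<close>)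
  finally show ?thesis unfolding Mf_def deg_def card_nbrs by simp
qed

end

sublocale root_branch \<subseteq> T': central_arrow_01 "Tprime T v0 w" None
  by (rule central_arrow_01_Tprime)

context root_branch
begin

lemma Ti_eq_star: "Ti T v0 w = star T' None"
  by (simp add: Ti_def)

lemma root_weight_Tprime: "y \<in> branch w \<Longrightarrow> T'.root_weight (relabel y) = root_weight y"
  using path_weight_Tprime[of v0 y] relabel_root
  by (simp add: T'.root_weight_def root_weight_def T'.gam_eq_tpath[symmetric] gam_eq_tpath[symmetric])

lemma root_deg_Tprime: "T'.root_deg = branch_deg w"
proof -
  have "inj_on relabel ((As T - A0 T) \<inter> branch w)" using inj_on_subset[OF inj_on_relabel] by blast
  then show ?thesis
    unfolding T'.root_deg_def branch_deg_def arrows_Tprime by (simp add: sum.reindex root_weight_Tprime)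
qed

lemma Nf_Tprime:
  assumes v: "v \<in> branch w"
  shows "Nf T' (relabel v) = (\<Sum>\<alpha>\<in>(As T - A0 T) \<inter> branch w. path_weight T (gam T v \<alpha>))"
proof -
  have inj: "inj_on relabel ((As T - A0 T) \<inter> branch w)" using inj_on_subset[OF inj_on_relabel] by blast
  have "Nf T' (relabel v) = (\<Sum>\<alpha>\<in>(As T - A0 T) \<inter> branch w. path_weight T' (gam T' (relabel v) (relabel \<alpha>)))"
    unfolding Nf_eq_sum_path_weight_if_01[OF T'.fd_01] arrows_Tprime
    using sum.reindex[OF inj] by (simp add: comp_def)
  also have "\<dots> = (\<Sum>\<alpha>\<in>(As T - A0 T) \<inter> branch w. path_weight T (gam T v \<alpha>))"
    using path_weight_Tprime v by (intro sum.cong) auto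
  finally show ?thesis .
qed

text \<open>Arrows outside the branch contribute through \<open>v0\<close> (\<open>path_weight_across_branches\<close>).\<close>

lemma Nf_eq_Nf_Tprime:
  assumes v: "v \<in> branch w"
  shows "Nf T v = Nf T' (relabel v) + root_weight v * (deg T v0 - branch_deg w)"
proof -
  let ?L = "As T - A0 T"
  have fin: "finite ?L" using decorated_tree_facts(2) by simp
  have "(\<Sum>\<alpha>\<in>?L - branch w. path_weight T (gam T v \<alpha>)) = (\<Sum>\<alpha>\<in>?L - branch w. root_weight v * root_weight \<alpha>)"
  proof (rule sum.cong[OF refl])
    fix \<alpha> assume \<alpha>: "\<alpha> \<in> ?L - branch w"
    then obtain w' where "w' \<in> nbrs T v0" "\<alpha> \<in> branch w'" using ex_branch arrows_subset by blast
    with \<alpha> show "path_weight T (gam T v \<alpha>) = root_weight v * root_weight \<alpha>"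
      using path_weight_across_branches[OF w_nbr _ _ v] by (cases "w = w'") auto
  qed
  moreover have "deg T v0 - branch_deg w = (\<Sum>\<alpha>\<in>?L - branch w. root_weight \<alpha>)"
    unfolding deg_eq_sum_root_weight branch_deg_def using sum.Int_Diff[OF fin, of root_weight "branch w"]
    by simp
  ultimately show ?thesis
    unfolding Nf_eq_sum_path_weight_if_01[OF fd_01] Nf_Tprime[OF v]
    using sum.Int_Diff[OF fin, of "\<lambda>\<alpha>. path_weight T (gam T v \<alpha>)" "branch w"]
    by (simp add: sum_distrib_left)
qed

lemma sum_vertices_Tprime:
  "(\<Sum>v'\<in>(Vs T' \<union> A0 T') - {None}. g v' * (int (valency T' v') - 2))
    = (\<Sum>v\<in>(Vs T \<union> A0 T) \<inter> branch w. g (relabel v) * (int (valency T v) - 2))"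
proof -
  have "inj_on relabel ((Vs T \<union> A0 T) \<inter> branch w)" using inj_on_subset[OF inj_on_relabel] by blast
  then show ?thesis
    unfolding vertices_Tprime by (simp add: sum.reindex valency_Tprime)
qed

lemma branch_M_eq:
  "branch_M w = (\<Sum>v\<in>(Vs T \<union> A0 T) \<inter> branch w. Nf T' (relabel v) * (int (valency T v) - 2))
    + (deg T v0 - branch_deg w) * (branch_deg w - 1)"
proof -
  let ?Y = "(Vs T \<union> A0 T) \<inter> branch w" and ?\<delta> = "\<lambda>v. int (valency T v) - 2"
  have "(\<Sum>v\<in>?Y. root_weight v * ?\<delta> v) = branch_deg w - 1"
    using T'.sum_root_weight_mult_valency_01 sum_vertices_Tprime[of T'.root_weight] root_weight_Tprime
      root_deg_Tprime
    by simp
  moreover have "branch_M w = (\<Sum>v\<in>?Y. Nf T' (relabel v) * ?\<delta> v + (deg T v0 - branch_deg w) * (root_weight v * ?\<delta> v))"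
    unfolding branch_M_def by (rule sum.cong[OF refl]) (simp add: Nf_eq_Nf_Tprime algebra_simps)
  ultimately show ?thesis by (simp add: sum.distrib flip: sum_distrib_left)
qed

lemma Mf_Ti: "Mf (Ti T v0 w) = branch_deg w + branch_M w - deg T v0 * branch_deg w + deg T v0"
  using T'.Mf_star sum_vertices_Tprime[of "Nf T'"] branch_M_eq root_deg_Tprime
  by (simp add: Ti_eq_star power2_eq_square algebra_simps)

lemma Ff_Ti: "Ff (Ti T v0 w) = int (card ((As T - A0 T) \<inter> branch w))"
proof -
  have "inj_on relabel ((As T - A0 T) \<inter> branch w)" using inj_on_subset[OF inj_on_relabel] by blast
  then show ?thesis using T'.Ff_star by (simp add: Ti_eq_star arrows_Tprime card_image)
qed

end

context root_decomposition
begin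

lemma root_branch: "w \<in> nbrs T v0 \<Longrightarrow> root_branch T v0 w"
  using root_decomposition_axioms by (simp add: root_branch_def root_branch_axioms_def)

lemma Ff_eq_sum_Ff_Ti: "Ff T = (\<Sum>w\<in>nbrs T v0. Ff (Ti T v0 w))"
proof -
  have "Ff T = (\<Sum>x\<in>As T - A0 T. 1)" using Ff_eq_card_if_01[OF fd_01] by simp
  also have "\<dots> = (\<Sum>w\<in>nbrs T v0. \<Sum>x\<in>(As T - A0 T) \<inter> branch w. 1)"
    by (rule sum_over_branches[OF arrows_subset])
  also have "\<dots> = (\<Sum>w\<in>nbrs T v0. Ff (Ti T v0 w))"
    using root_branch.Ff_Ti[OF root_branch] by simp
  finally show ?thesis .
qed

lemma Mf_add_sum_Mf_Ti:
  "Mf T + (\<Sum>w\<in>nbrs T v0. Mf (Ti T v0 w)) = 2 - (deg T v0 - 1) * (deg T v0 - 2)"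
proof -
  have "(\<Sum>w\<in>nbrs T v0. Mf (Ti T v0 w))
      = (\<Sum>w\<in>nbrs T v0. branch_deg w + branch_M w - deg T v0 * branch_deg w + deg T v0)"
    using root_branch.Mf_Ti[OF root_branch] by simp
  also have "\<dots> = deg T v0 + (\<Sum>w\<in>nbrs T v0. branch_M w) - deg T v0 * deg T v0
      + int (card (nbrs T v0)) * deg T v0"
    using deg_eq_sum_branch_deg sum_distrib_left[of "deg T v0" branch_deg "nbrs T v0"]
    by (simp add: sum.distrib sum_subtractf)
  finally show ?thesis
    using Mf_eq_sum_branch_M by (simp add: algebra_simps)
qed

end

theorem theorem6p8:
  fixes T :: "'a dtree" and v0 :: 'a
  assumes "decorated_tree T"
    and "is_root T v0"
    and "\<forall>\<alpha>\<in>As T. fd T \<alpha> \<in> {0, 1}"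
    and "valency T v0 \<ge> 1"
  shows "genus T = (real_of_int (deg T v0) - 1) * (real_of_int (deg T v0) - 2) / 2
                   - (\<Sum>w\<in>nbrs T v0. delta (Ti T v0 w))"
proof -
  have "v0 \<in> cells T" using assms(2) by (simp add: is_root_def cells_def)
  then interpret root_decomposition T v0
    using assms(1-3) by unfold_locales (auto simp: decorated_tree_def)
  have "2 - Mf T - Ff T = (deg T v0 - 1) * (deg T v0 - 2) - (\<Sum>w\<in>nbrs T v0. Ff (Ti T v0 w) - Mf (Ti T v0 w))"
    using Mf_add_sum_Mf_Ti Ff_eq_sum_Ff_Ti by (simp add: sum_subtractf)
  then have "real_of_int (2 - Mf T - Ff T) / 2 = real_of_int ((deg T v0 - 1) * (deg T v0 - 2)) / 2
      - (\<Sum>w\<in>nbrs T v0. real_of_int (Ff (Ti T v0 w) - Mf (Ti T v0 w)) / 2)"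
    by (simp add: diff_divide_distrib sum_divide_distrib)
  then show ?thesis
    unfolding genus_def delta_def by simp
qed

end
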